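(* Let $Z$ be a measure space, $p\in(1,\infty)$, and $x,u,v\in L^p(Z)$ with $\|u\|=\|v\|=r>0$. Assume that $B_r(x+u)\cap B_r(-x-v)=\emptyset$ and $B_r(x-u)\cap B_r(-x+v)=\emptyset$. Then $$\|u-v\|^p\le 2^{p-1}p(p-1)r^{p-2}\|x\|^2\quad\text{if }p\in[2,\infty),\qquad \|u-v\|^2\le\frac{8}{p(p-1)}r^{2-p}\|x\|^p\quad\text{if }p\in(1,2].$$
   Context: $\|\cdot\|$ denotes the $L^p(Z)$ norm and $B_r(y)=\{w\in L^p(Z):\|w-y\|<r\}$ the open ball. *)

theory Defs
  imports "HOL-Analysis.Analysis"
begin

text \<open>Real L^p(Z), represented by measurable representatives; the norm and balls only
depend on a.e. classes, so working with representatives is faithful.\<close>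

definition Lp_space :: "'a measure \<Rightarrow> real \<Rightarrow> ('a \<Rightarrow> real) set" where
  "Lp_space M p = {f \<in> borel_measurable M. integrable M (\<lambda>z. \<bar>f z\<bar> powr p)}"

definition Lp_norm :: "'a measure \<Rightarrow> real \<Rightarrow> ('a \<Rightarrow> real) \<Rightarrow> real" where
  "Lp_norm M p f = (\<integral>z. \<bar>f z\<bar> powr p \<partial>M) powr (1 / p)"

definition Lp_ball :: "'a measure \<Rightarrow> real \<Rightarrow> ('a \<Rightarrow> real) \<Rightarrow> real \<Rightarrow> ('a \<Rightarrow> real) set" where
  "Lp_ball M p y r = {w \<in> Lp_space M p. Lp_norm M p (\<lambda>z. w z - y z) < r}"

end

theory Submission
  imports Defs
begin

text \<open>
  Put \<open>y = (u + v) / 2\<close>, \<open>d = (u - v) / 2\<close> and \<open>g h t = \<integral>\<bar>y + t h\<bar>\<^sup>p\<close>. The midpoint \<open>d\<close> is at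
  distance \<open>\<parallel>y + x\<parallel>\<close> from both \<open>x + u\<close> and \<open>-x - v\<close>, so disjointness of the balls means
  \<open>g x 1 \<ge> r\<^sup>p\<close> and, symmetrically, \<open>g x (-1) \<ge> r\<^sup>p\<close>.

  Pointwise Taylor bounds for \<open>\<bar>c\<bar>\<^sup>p\<close>, integrated and combined with Hoelder's inequality, show that
  between nearby \<open>s, t\<close> the function \<open>g h\<close> deviates from its tangent line by at most (for \<open>p \<ge> 2\<close>),
  resp. at least (for \<open>p \<le> 2\<close>), \<open>p (p - 1) / 2 \<parallel>h\<parallel>\<^sup>2 (t - s)\<^sup>2 G\<^bsup>1 - 2/p\<^esup>\<close>, where \<open>G\<close> is
  \<open>g h s\<close> up to an error \<open>O(\<bar>t - s\<bar>)\<close>. On an interval where \<open>g h \<le> A\<close> this is a uniform local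
  quadratic bound with coefficient \<open>p (p - 1) / 2 \<parallel>h\<parallel>\<^sup>2 A\<^bsup>1 - 2/p\<^esup>\<close> up to \<open>o((t - s)\<^sup>2)\<close>, and a
  telescoping argument makes it global.

  For \<open>p \<ge> 2\<close> take \<open>h = x\<close> on the interval between the first hitting times of \<open>r\<^sup>p\<close> on either
  side of 0: this gives \<open>r\<^sup>p - \<parallel>y\<parallel>\<^sup>p \<le> p (p - 1) / 2 r\<^bsup>p - 2\<^esup> \<parallel>x\<parallel>\<^sup>2\<close>, and Clarkson's
  inequality \<open>\<parallel>y\<parallel>\<^sup>p + \<parallel>d\<parallel>\<^sup>p \<le> r\<^sup>p\<close> turns it into the bound on \<open>\<parallel>u - v\<parallel> = 2 \<parallel>d\<parallel>\<close>. For
  \<open>p \<le> 2\<close> take \<open>h = d\<close>: then \<open>g d (\<plusminus>1) = r\<^sup>p\<close>, \<open>g d \<le> r\<^sup>p\<close> on \<open>[-1, 1]\<close> by convexity, and the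
  lower bound gives \<open>p (p - 1) / 2 r\<^bsup>p - 2\<^esup> \<parallel>d\<parallel>\<^sup>2 \<le> r\<^sup>p - \<parallel>y\<parallel>\<^sup>p\<close>, which the other Clarkson
  inequality bounds by \<open>\<parallel>x\<parallel>\<^sup>p\<close>.
\<close>

section \<open>Calculus of \<open>\<bar>c\<bar> powr p\<close>\<close>

definition signed_powr :: "real \<Rightarrow> real \<Rightarrow> real" where
  "signed_powr p c = sgn c * \<bar>c\<bar> powr (p - 1)"

lemma signed_powr_nonneg: "0 \<le> c \<Longrightarrow> signed_powr p c = c powr (p - 1)"
  by (cases "c = 0") (auto simp: signed_powr_def)

lemma signed_powr_nonpos: "c \<le> 0 \<Longrightarrow> signed_powr p c = - (\<bar>c\<bar> powr (p - 1))"
  by (cases "c = 0") (auto simp: signed_powr_def)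

lemma signed_powr_minus: "signed_powr p (- c) = - signed_powr p c"
  by (simp add: signed_powr_def)

lemma abs_signed_powr: "\<bar>signed_powr p c\<bar> \<le> \<bar>c\<bar> powr (p - 1)"
  by (simp add: signed_powr_def abs_mult abs_sgn_eq)

lemma signed_powr_mono:
  assumes "1 < p" "a \<le> c"
  shows "signed_powr p a \<le> signed_powr p c"
proof -
  consider "0 \<le> a" | "c \<le> 0" | "a < 0" "0 < c" by linarith
  then show ?thesis
  proof cases
    case 3
    then show ?thesis
      by (simp add: signed_powr_nonneg signed_powr_nonpos) (smt (verit) powr_ge_zero)
  qed (use assms in \<open>simp_all add: signed_powr_nonneg signed_powr_nonpos powr_mono2\<close>)
qed

lemma powr_eq_mult_powr_diff_one: "0 \<le> t \<Longrightarrow> (t::real) powr s = t * t powr (s - 1)"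
  by (cases "t = 0") (simp_all add: powr_add[symmetric] powr_mult_base)

lemma powr_mean_value:
  fixes a c q :: real
  assumes "0 < q" "0 \<le> a" "a < c"
  obtains z where "a < z" "z < c" "c powr q - a powr q = q * (c - a) * z powr (q - 1)"
proof -
  have deriv: "((\<lambda>t. t powr q) has_real_derivative q * t powr (q - 1)) (at t)" if "a < t" for t
    using that assms by (intro has_real_derivative_powr) auto
  have "continuous_on {a..c} (\<lambda>t. t powr q)"
    using assms by (intro continuous_on_powr' continuous_on_id continuous_on_const) auto
  moreover have "(\<lambda>t. t powr q) differentiable (at t)" if "a < t" for t
    using deriv[OF that] real_differentiable_def by blast
  ultimately obtain l z where z: "a < z" "z < c" "((\<lambda>t. t powr q) has_real_derivative l) (at z)"
    "c powr q - a powr q = (c - a) * l"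
    using MVT[OF \<open>a < c\<close>] by blast
  have "l = q * z powr (q - 1)"
    using DERIV_unique[OF z(3) deriv[OF z(1)]] .
  with z that show ?thesis by (simp add: mult_ac)
qed

lemma powr_diff_le:
  fixes a c q :: real
  assumes "1 \<le> q" "0 \<le> a" "a \<le> c"
  shows "c powr q - a powr q \<le> q * (c - a) * c powr (q - 1)"
proof (cases "a = c")
  case False
  with assms have "a < c" by simp
  then obtain z where z: "a < z" "z < c" "c powr q - a powr q = q * (c - a) * z powr (q - 1)"
    using powr_mean_value[of q a c] assms by (smt (verit))
  moreover have "z powr (q - 1) \<le> c powr (q - 1)"
    using z assms by (intro powr_mono2) auto
  ultimately show ?thesis
    using assms by (simp add: mult_left_mono)
qed simp

lemma powr_diff_ge:
  fixes a c q :: real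
  assumes "0 < q" "q \<le> 1" "0 \<le> a" "a \<le> c"
  shows "q * (c - a) * c powr (q - 1) \<le> c powr q - a powr q"
proof (cases "a = c")
  case False
  with assms have "a < c" by simp
  then obtain z where z: "a < z" "z < c" "c powr q - a powr q = q * (c - a) * z powr (q - 1)"
    using powr_mean_value[of q a c] assms by blast
  moreover have "c powr (q - 1) \<le> z powr (q - 1)"
    using z assms by (intro powr_mono2') auto
  ultimately show ?thesis
    using assms by (simp add: mult_left_mono)
qed simp

lemma has_real_derivative_abs_powr:
  assumes "1 < p"
  shows "((\<lambda>c. \<bar>c\<bar> powr p) has_real_derivative p * signed_powr p c) (at c)"
proof -
  consider "0 < c" | "c < 0" | "c = 0" by linarith
  then show ?thesis
  proof cases
    case 1
    have "\<forall>\<^sub>F t in nhds c. \<bar>t\<bar> powr p = t powr p"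
      using eventually_nhds_in_open[of "{0<..}" c] 1 by (auto elim!: eventually_mono)
    then show ?thesis
      using has_real_derivative_powr[OF 1, of p] 1
      by (subst DERIV_cong_ev[OF refl _ refl]) (simp_all add: signed_powr_nonneg)
  next
    case 2
    have "\<forall>\<^sub>F t in nhds c. \<bar>t\<bar> powr p = (- t) powr p"
      using eventually_nhds_in_open[of "{..<0}" c] 2 by (auto elim!: eventually_mono)
    moreover have "((\<lambda>t. (- t) powr p) has_real_derivative p * (- c) powr (p - 1) * (- 1)) (at c)"
      using 2 by (auto intro!: derivative_eq_intros)
    ultimately show ?thesis
      using 2 by (subst DERIV_cong_ev[OF refl _ refl]) (simp_all add: signed_powr_nonpos)
  next
    case 3
    have "((\<lambda>h. (\<bar>0 + h\<bar> powr p - \<bar>0\<bar> powr p) / h) \<longlongrightarrow> 0) (at 0)"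
    proof (rule Lim_null_comparison)
      show "\<forall>\<^sub>F h in at 0. norm ((\<bar>0 + h\<bar> powr p - \<bar>0\<bar> powr p) / h) \<le> \<bar>h\<bar> powr (p - 1)"
      proof (intro always_eventually allI)
        show "norm ((\<bar>0 + h\<bar> powr p - \<bar>0\<bar> powr p) / h) \<le> \<bar>h\<bar> powr (p - 1)" for h :: real
          by (cases "h = 0") (simp_all add: powr_diff abs_divide)
      qed
      show "((\<lambda>h. \<bar>h\<bar> powr (p - 1)) \<longlongrightarrow> 0) (at 0)"
        using assms by (intro tendsto_zero_powrI tendsto_intros) (auto intro: tendsto_rabs_zero)
    qed
    then show ?thesis using 3 by (simp add: has_field_derivative_iff signed_powr_def)
  qed
qed

lemma convex_on_abs_powr:
  assumes "1 < p"
  shows "convex_on UNIV (\<lambda>c::real. \<bar>c\<bar> powr p)"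
  by (rule convex_on_realI[where f'="\<lambda>c. p * signed_powr p c"])
     (use assms has_real_derivative_abs_powr signed_powr_mono in auto)

lemma abs_powr_convex_comb:
  fixes a b l :: real
  assumes "1 < p" "0 \<le> l" "l \<le> 1"
  shows "\<bar>l * a + (1 - l) * b\<bar> powr p \<le> l * \<bar>a\<bar> powr p + (1 - l) * \<bar>b\<bar> powr p"
  using convex_onD[OF convex_on_abs_powr[OF assms(1)], of "1 - l" a b] assms
  by (simp add: algebra_simps)

lemma signed_powr_diff_le:
  assumes "2 \<le> p" "a \<le> c"
  shows "signed_powr p c - signed_powr p a \<le> (p - 1) * (c - a) * max \<bar>a\<bar> \<bar>c\<bar> powr (p - 2)"
proof -
  have same_sign: "signed_powr p c' - signed_powr p a' \<le> (p - 1) * (c' - a') * max \<bar>a'\<bar> \<bar>c'\<bar> powr (p - 2)"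
    if "0 \<le> a'" "a' \<le> c'" for a' c'
    using powr_diff_le[of "p - 1" a' c'] that assms by (simp add: signed_powr_nonneg max_def)
  consider "0 \<le> a" | "c \<le> 0" | "a < 0" "0 < c" by linarith
  then show ?thesis
  proof cases
    case 2
    then show ?thesis
      using same_sign[of "- c" "- a"] assms by (simp add: signed_powr_minus max.commute)
  next
    case 3
    define m where "m = max \<bar>a\<bar> \<bar>c\<bar>"
    have "t powr (p - 1) \<le> (p - 1) * t * m powr (p - 2)" if "0 < t" "t \<le> m" for t
    proof -
      have "t powr (p - 1) = t * t powr (p - 2)"
        using powr_eq_mult_powr_diff_one[of t "p - 1"] that by simp
      also have "\<dots> \<le> t * m powr (p - 2)"
        using that assms by (intro mult_left_mono powr_mono2) auto
      also have "\<dots> \<le> (p - 1) * t * m powr (p - 2)"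
        using that assms by (intro mult_right_mono) auto
      finally show ?thesis .
    qed
    from this[of c] this[of "\<bar>a\<bar>"] 3 show ?thesis
      by (simp add: signed_powr_nonneg signed_powr_nonpos m_def algebra_simps)
  qed (use same_sign assms in simp)
qed

lemma signed_powr_diff_ge:
  assumes "1 < p" "p \<le> 2" "a \<le> c"
  shows "(p - 1) * (c - a) * max \<bar>a\<bar> \<bar>c\<bar> powr (p - 2) \<le> signed_powr p c - signed_powr p a"
proof -
  have same_sign: "(p - 1) * (c' - a') * max \<bar>a'\<bar> \<bar>c'\<bar> powr (p - 2) \<le> signed_powr p c' - signed_powr p a'"
    if "0 \<le> a'" "a' \<le> c'" for a' c'
    using powr_diff_ge[of "p - 1" a' c'] that assms by (simp add: signed_powr_nonneg max_def)
  consider "0 \<le> a" | "c \<le> 0" | "a < 0" "0 < c" by linarith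
  then show ?thesis
  proof cases
    case 2
    then show ?thesis
      using same_sign[of "- c" "- a"] assms by (simp add: signed_powr_minus max.commute)
  next
    case 3
    define m where "m = max \<bar>a\<bar> \<bar>c\<bar>"
    have "(p - 1) * t * m powr (p - 2) \<le> t powr (p - 1)" if "0 < t" "t \<le> m" for t
    proof -
      have "(p - 1) * t * m powr (p - 2) \<le> t * m powr (p - 2)"
        using that assms by (intro mult_right_mono) auto
      also have "\<dots> \<le> t * t powr (p - 2)"
        using that assms by (intro mult_left_mono powr_mono2') auto
      also have "\<dots> = t powr (p - 1)"
        using powr_eq_mult_powr_diff_one[of t "p - 1"] that by simp
      finally show ?thesis .
    qed
    from this[of c] this[of "\<bar>a\<bar>"] 3 show ?thesis
      by (simp add: signed_powr_nonneg signed_powr_nonpos m_def algebra_simps)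
  qed (use same_sign assms in simp)
qed

lemma signed_powr_increment_le:
  assumes "2 \<le> p"
  shows "(c - a) * (signed_powr p c - signed_powr p a) \<le> (p - 1) * (c - a)\<^sup>2 * max \<bar>a\<bar> \<bar>c\<bar> powr (p - 2)"
proof (cases "a \<le> c")
  case True
  then show ?thesis
    using mult_left_mono[OF signed_powr_diff_le[OF assms True], of "c - a"]
    by (simp add: power2_eq_square mult_ac)
next
  case False
  then show ?thesis
    using mult_left_mono[OF signed_powr_diff_le[OF assms, of c a], of "a - c"]
    by (simp add: power2_eq_square algebra_simps max.commute)
qed

lemma signed_powr_increment_ge:
  assumes "1 < p" "p \<le> 2"
  shows "(p - 1) * (c - a)\<^sup>2 * max \<bar>a\<bar> \<bar>c\<bar> powr (p - 2) \<le> (c - a) * (signed_powr p c - signed_powr p a)"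
proof (cases "a \<le> c")
  case True
  then show ?thesis
    using mult_left_mono[OF signed_powr_diff_ge[OF assms True], of "c - a"]
    by (simp add: power2_eq_square mult_ac)
next
  case False
  then show ?thesis
    using mult_left_mono[OF signed_powr_diff_ge[OF assms, of c a], of "a - c"]
    by (simp add: power2_eq_square algebra_simps max.commute)
qed

lemma max_abs_segment_le:
  fixes a e \<sigma> :: real
  assumes "0 \<le> \<sigma>" "\<sigma> \<le> 1"
  shows "max \<bar>a\<bar> \<bar>a + \<sigma> * e\<bar> \<le> max \<bar>a\<bar> \<bar>a + e\<bar>"
proof -
  have "a + \<sigma> * e = (1 - \<sigma>) * a + \<sigma> * (a + e)" by (simp add: algebra_simps)
  then have "\<bar>a + \<sigma> * e\<bar> \<le> (1 - \<sigma>) * \<bar>a\<bar> + \<sigma> * \<bar>a + e\<bar>"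
    using assms by (metis abs_mult abs_of_nonneg abs_triangle_ineq diff_ge_0_iff_ge)
  also have "\<dots> \<le> (1 - \<sigma>) * max \<bar>a\<bar> \<bar>a + e\<bar> + \<sigma> * max \<bar>a\<bar> \<bar>a + e\<bar>"
    using assms by (intro add_mono mult_left_mono) auto
  finally show ?thesis by (simp add: algebra_simps)
qed

lemma diff_le_of_deriv_le_linear:
  fixes F F' :: "real \<Rightarrow> real"
  assumes "\<And>\<sigma>. 0 \<le> \<sigma> \<Longrightarrow> \<sigma> \<le> 1 \<Longrightarrow> (F has_real_derivative F' \<sigma>) (at \<sigma>)"
    and "\<And>\<sigma>. 0 \<le> \<sigma> \<Longrightarrow> \<sigma> \<le> 1 \<Longrightarrow> F' \<sigma> \<le> k * \<sigma>"
  shows "F 1 - F 0 \<le> k / 2"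
proof -
  define G where "G \<sigma> = F \<sigma> - k / 2 * \<sigma>\<^sup>2" for \<sigma>
  have "G 1 \<le> G 0"
  proof (rule DERIV_nonpos_imp_nonincreasing[of 0 1])
    fix \<sigma> :: real assume "0 \<le> \<sigma>" "\<sigma> \<le> 1"
    then show "\<exists>y. (G has_real_derivative y) (at \<sigma>) \<and> y \<le> 0"
      unfolding G_def using assms
      by (intro exI[of _ "F' \<sigma> - k * \<sigma>"] conjI) (auto intro!: derivative_eq_intros)
  qed simp
  then show ?thesis by (simp add: G_def)
qed

lemma has_real_derivative_abs_powr_line:
  assumes "1 < p"
  shows "((\<lambda>\<sigma>. \<bar>a + \<sigma> * e\<bar> powr p - p * signed_powr p a * \<sigma> * e)
           has_real_derivative p * e * (signed_powr p (a + \<sigma> * e) - signed_powr p a)) (at \<sigma>)"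
proof -
  have "((\<lambda>\<sigma>. \<bar>a + \<sigma> * e\<bar> powr p) has_real_derivative p * signed_powr p (a + \<sigma> * e) * e) (at \<sigma>)"
    by (rule DERIV_chain2[OF has_real_derivative_abs_powr[OF assms]]) (auto intro!: derivative_eq_intros)
  moreover have "((\<lambda>\<sigma>. p * signed_powr p a * \<sigma> * e) has_real_derivative p * signed_powr p a * e) (at \<sigma>)"
    by (auto intro!: derivative_eq_intros)
  ultimately show ?thesis
    using DERIV_diff by (fastforce simp: algebra_simps)
qed

lemma abs_powr_taylor_le:
  assumes "2 \<le> p"
  shows "\<bar>a + e\<bar> powr p - \<bar>a\<bar> powr p - p * signed_powr p a * e
           \<le> p * (p - 1) / 2 * e\<^sup>2 * max \<bar>a\<bar> \<bar>a + e\<bar> powr (p - 2)"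
proof -
  define M where "M = max \<bar>a\<bar> \<bar>a + e\<bar> powr (p - 2)"
  define F where "F \<sigma> = \<bar>a + \<sigma> * e\<bar> powr p - p * signed_powr p a * \<sigma> * e" for \<sigma>
  have "p * e * (signed_powr p (a + \<sigma> * e) - signed_powr p a) \<le> (p * (p - 1) * e\<^sup>2 * M) * \<sigma>"
    if "0 \<le> \<sigma>" "\<sigma> \<le> 1" for \<sigma>
  proof (cases "\<sigma> = 0")
    case False
    have "max \<bar>a\<bar> \<bar>a + \<sigma> * e\<bar> \<le> max \<bar>a\<bar> \<bar>a + e\<bar>"
      using max_abs_segment_le[OF that, of a e] .
    then have "max \<bar>a\<bar> \<bar>a + \<sigma> * e\<bar> powr (p - 2) \<le> M"
      unfolding M_def using assms by (intro powr_mono2) auto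
    then have "(\<sigma> * e) * (signed_powr p (a + \<sigma> * e) - signed_powr p a) \<le> (p - 1) * (\<sigma> * e)\<^sup>2 * M"
      using signed_powr_increment_le[OF assms, of "a + \<sigma> * e" a] assms
      by (smt (verit) mult_left_mono zero_le_power2 mult_nonneg_nonneg)
    then have "p * ((\<sigma> * e) * (signed_powr p (a + \<sigma> * e) - signed_powr p a)) \<le> p * ((p - 1) * (\<sigma> * e)\<^sup>2 * M)"
      using assms by (intro mult_left_mono) auto
    then have "\<sigma> * (p * e * (signed_powr p (a + \<sigma> * e) - signed_powr p a)) \<le> \<sigma> * ((p * (p - 1) * e\<^sup>2 * M) * \<sigma>)"
      by (simp add: power2_eq_square algebra_simps)
    with False that show ?thesis by (simp add: mult_le_cancel_left_pos)
  qed simp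
  moreover have "(F has_real_derivative p * e * (signed_powr p (a + \<sigma> * e) - signed_powr p a)) (at \<sigma>)" for \<sigma>
    unfolding F_def using has_real_derivative_abs_powr_line assms by simp
  ultimately have "F 1 - F 0 \<le> p * (p - 1) * e\<^sup>2 * M / 2"
    by (intro diff_le_of_deriv_le_linear)
  then show ?thesis by (simp add: F_def M_def)
qed

lemma abs_powr_taylor_ge:
  assumes "1 < p" "p \<le> 2"
  shows "p * (p - 1) / 2 * e\<^sup>2 * max \<bar>a\<bar> \<bar>a + e\<bar> powr (p - 2)
           \<le> \<bar>a + e\<bar> powr p - \<bar>a\<bar> powr p - p * signed_powr p a * e"
proof (cases "e = 0")
  case False
  define M where "M = max \<bar>a\<bar> \<bar>a + e\<bar> powr (p - 2)"
  define F where "F \<sigma> = p * signed_powr p a * \<sigma> * e - \<bar>a + \<sigma> * e\<bar> powr p" for \<sigma>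
  have "- (p * e * (signed_powr p (a + \<sigma> * e) - signed_powr p a)) \<le> - (p * (p - 1) * e\<^sup>2 * M) * \<sigma>"
    if "0 \<le> \<sigma>" "\<sigma> \<le> 1" for \<sigma>
  proof (cases "\<sigma> = 0")
    case \<sigma>: False
    have "0 < max \<bar>a\<bar> \<bar>a + \<sigma> * e\<bar>"
      using \<open>e \<noteq> 0\<close> \<sigma> by (cases "a = 0") auto
    then have "M \<le> max \<bar>a\<bar> \<bar>a + \<sigma> * e\<bar> powr (p - 2)"
      unfolding M_def using assms max_abs_segment_le[OF that, of a e] by (intro powr_mono2') auto
    then have "(p - 1) * (\<sigma> * e)\<^sup>2 * M \<le> (\<sigma> * e) * (signed_powr p (a + \<sigma> * e) - signed_powr p a)"
      using signed_powr_increment_ge[OF assms, of "a + \<sigma> * e" a] assms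
      by (smt (verit) mult_left_mono zero_le_power2 mult_nonneg_nonneg)
    then have "p * ((p - 1) * (\<sigma> * e)\<^sup>2 * M) \<le> p * ((\<sigma> * e) * (signed_powr p (a + \<sigma> * e) - signed_powr p a))"
      using assms by (intro mult_left_mono) auto
    then have "\<sigma> * (- (p * e * (signed_powr p (a + \<sigma> * e) - signed_powr p a))) \<le> \<sigma> * (- (p * (p - 1) * e\<^sup>2 * M) * \<sigma>)"
      by (simp add: power2_eq_square algebra_simps)
    with \<sigma> that show ?thesis by (simp add: mult_le_cancel_left_pos)
  qed simp
  moreover have "(F has_real_derivative - (p * e * (signed_powr p (a + \<sigma> * e) - signed_powr p a))) (at \<sigma>)" for \<sigma>
    unfolding F_def using DERIV_minus[OF has_real_derivative_abs_powr_line[OF assms(1), of a e \<sigma>]]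
    by (simp add: algebra_simps)
  ultimately have "F 1 - F 0 \<le> - (p * (p - 1) * e\<^sup>2 * M) / 2"
    by (intro diff_le_of_deriv_le_linear)
  then show ?thesis by (simp add: F_def M_def)
qed simp

section \<open>Pointwise Clarkson inequalities\<close>

lemma abs_powr_eq_power2_powr: "\<bar>t :: real\<bar> powr p = (t\<^sup>2) powr (p / 2)"
proof -
  have "(t\<^sup>2) powr (p / 2) = (\<bar>t\<bar> powr 2) powr (p / 2)" by simp
  also have "\<dots> = \<bar>t\<bar> powr p" by (subst powr_powr) simp
  finally show ?thesis by simp
qed

lemma powr_superadditive:
  fixes x y s :: real
  assumes "1 \<le> s" "0 \<le> x" "0 \<le> y"
  shows "x powr s + y powr s \<le> (x + y) powr s"
proof -
  have "x * x powr (s - 1) \<le> x * (x + y) powr (s - 1)" "y * y powr (s - 1) \<le> y * (x + y) powr (s - 1)"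
    using assms by (auto intro!: mult_left_mono powr_mono2)
  then show ?thesis
    using assms powr_eq_mult_powr_diff_one[of _ s] by (simp add: algebra_simps)
qed

lemma powr_subadditive:
  fixes x y s :: real
  assumes "0 < s" "s \<le> 1" "0 \<le> x" "0 \<le> y"
  shows "(x + y) powr s \<le> x powr s + y powr s"
proof -
  have bound: "t * (x + y) powr (s - 1) \<le> t powr s" if "0 \<le> t" "t \<le> x + y" for t
  proof (cases "t = 0")
    case False
    then have "t * (x + y) powr (s - 1) \<le> t * t powr (s - 1)"
      using that assms by (intro mult_left_mono powr_mono2') auto
    then show ?thesis using that powr_eq_mult_powr_diff_one[of t s] by simp
  qed simp
  have "(x + y) powr s = x * (x + y) powr (s - 1) + y * (x + y) powr (s - 1)"
    using assms powr_eq_mult_powr_diff_one[of "x + y" s] by (simp add: algebra_simps)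
  with bound[of x] bound[of y] assms show ?thesis by linarith
qed

lemma weighted_geometric_le_arithmetic:
  fixes F G \<theta> :: real
  assumes "0 \<le> F" "0 \<le> G" "0 \<le> \<theta>" "\<theta> \<le> 1"
  shows "F powr \<theta> * G powr (1 - \<theta>) \<le> \<theta> * F + (1 - \<theta>) * G"
  using Youngs_inequality_0[of \<theta> "1 - \<theta>" F G] assms by (cases "F = 0 \<or> G = 0") auto

lemma powr_midpoint_concave:
  fixes X Y s :: real
  assumes "0 < s" "s \<le> 1" "0 \<le> X" "0 \<le> Y"
  shows "(X powr s + Y powr s) / 2 \<le> ((X + Y) / 2) powr s"
proof (cases "X + Y = 0")
  case True
  then have "X = 0" "Y = 0" using assms by auto
  then show ?thesis by simp
next
  case False
  define A where "A = (X + Y) / 2"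
  have A: "0 < A" using False assms by (simp add: A_def)
  have young: "Z powr s * A powr (1 - s) \<le> s * Z + (1 - s) * A" if "0 \<le> Z" for Z
    using weighted_geometric_le_arithmetic[of Z A s] assms A that by simp
  have "(X powr s + Y powr s) * A powr (1 - s) \<le> s * X + (1 - s) * A + (s * Y + (1 - s) * A)"
    using young[of X] young[of Y] assms by (simp add: algebra_simps)
  also have "\<dots> = 2 * A" by (simp add: A_def algebra_simps)
  also have "\<dots> = (2 * A powr s) * A powr (1 - s)"
    using A by (simp add: powr_add[symmetric])
  finally show ?thesis
    using A by (simp add: A_def mult_le_cancel_right)
qed

lemma clarkson_abs_powr_ge2:
  fixes a b p :: real
  assumes "2 \<le> p"
  shows "\<bar>(a + b) / 2\<bar> powr p + \<bar>(a - b) / 2\<bar> powr p \<le> (\<bar>a\<bar> powr p + \<bar>b\<bar> powr p) / 2"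
proof -
  define s where "s = p / 2"
  have s: "1 \<le> s" using assms by (simp add: s_def)
  have "\<bar>(a + b) / 2\<bar> powr p + \<bar>(a - b) / 2\<bar> powr p = (((a + b) / 2)\<^sup>2) powr s + (((a - b) / 2)\<^sup>2) powr s"
    by (simp only: abs_powr_eq_power2_powr s_def)
  also have "\<dots> \<le> (((a + b) / 2)\<^sup>2 + ((a - b) / 2)\<^sup>2) powr s"
    using s by (intro powr_superadditive) auto
  also have "((a + b) / 2)\<^sup>2 + ((a - b) / 2)\<^sup>2 = (1 / 2) * a\<^sup>2 + (1 - 1 / 2) * b\<^sup>2"
    by (simp add: power2_eq_square field_simps)
  also have "((1 / 2) * a\<^sup>2 + (1 - 1 / 2) * b\<^sup>2) powr s \<le> (1 / 2) * (a\<^sup>2) powr s + (1 - 1 / 2) * (b\<^sup>2) powr s"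
  proof (cases "s = 1")
    case False
    with s have "1 < s" by simp
    from abs_powr_convex_comb[OF this, of "1 / 2" "a\<^sup>2" "b\<^sup>2"] show ?thesis by simp
  qed simp
  also have "\<dots> = (\<bar>a\<bar> powr p + \<bar>b\<bar> powr p) / 2"
    by (simp add: abs_powr_eq_power2_powr s_def)
  finally show ?thesis .
qed

lemma clarkson_abs_powr_le2:
  fixes a b p :: real
  assumes "1 < p" "p \<le> 2"
  shows "\<bar>a + b\<bar> powr p + \<bar>a - b\<bar> powr p \<le> 2 * \<bar>a\<bar> powr p + 2 * \<bar>b\<bar> powr p"
proof -
  define s where "s = p / 2"
  have s: "0 < s" "s \<le> 1" using assms by (simp_all add: s_def)
  have "\<bar>a + b\<bar> powr p + \<bar>a - b\<bar> powr p = ((a + b)\<^sup>2) powr s + ((a - b)\<^sup>2) powr s"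
    by (simp only: abs_powr_eq_power2_powr s_def)
  also have "\<dots> \<le> 2 * (((a + b)\<^sup>2 + (a - b)\<^sup>2) / 2) powr s"
    using powr_midpoint_concave[OF s, of "(a + b)\<^sup>2" "(a - b)\<^sup>2"] by simp
  also have "((a + b)\<^sup>2 + (a - b)\<^sup>2) / 2 = a\<^sup>2 + b\<^sup>2"
    by (simp add: power2_eq_square field_simps)
  also have "2 * (a\<^sup>2 + b\<^sup>2) powr s \<le> 2 * ((a\<^sup>2) powr s + (b\<^sup>2) powr s)"
    using powr_subadditive[OF s, of "a\<^sup>2" "b\<^sup>2"] by simp
  also have "\<dots> = 2 * \<bar>a\<bar> powr p + 2 * \<bar>b\<bar> powr p"
    by (simp only: abs_powr_eq_power2_powr s_def distrib_left)
  finally show ?thesis .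
qed

lemma powr_mult_powr_le_powr_add:
  fixes a b \<alpha> \<beta> p :: real
  assumes "0 \<le> a" "0 \<le> b" "0 \<le> \<alpha>" "0 \<le> \<beta>" "\<alpha> + \<beta> = p"
  shows "a powr \<alpha> * b powr \<beta> \<le> a powr p + b powr p"
proof -
  define m where "m = max a b"
  have "a powr \<alpha> * b powr \<beta> \<le> m powr \<alpha> * m powr \<beta>"
    using assms by (intro mult_mono powr_mono2) (auto simp: m_def)
  also have "\<dots> \<le> m powr p"
    using assms by (cases "m = 0") (simp_all add: powr_add[symmetric])
  also have "\<dots> \<le> a powr p + b powr p"
    by (cases "a \<le> b") (auto simp: m_def max_def)
  finally show ?thesis .
qed

lemma abs_add_powr_le:
  fixes X Y p :: real
  assumes "0 \<le> p"
  shows "\<bar>X + Y\<bar> powr p \<le> 2 powr p * (\<bar>X\<bar> powr p + \<bar>Y\<bar> powr p)"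
proof -
  have "\<bar>X + Y\<bar> powr p \<le> (2 * max \<bar>X\<bar> \<bar>Y\<bar>) powr p"
    using assms by (intro powr_mono2) (auto simp: max_def)
  also have "\<dots> \<le> 2 powr p * (\<bar>X\<bar> powr p + \<bar>Y\<bar> powr p)"
    by (auto simp: powr_mult max_def intro!: mult_left_mono)
  finally show ?thesis .
qed

lemma abs_powr_diff_le:
  fixes A B m p :: real
  assumes "1 \<le> p" "\<bar>A\<bar> \<le> m" "\<bar>B\<bar> \<le> m"
  shows "\<bar>\<bar>A\<bar> powr p - \<bar>B\<bar> powr p\<bar> \<le> p * \<bar>A - B\<bar> * m powr (p - 1)"
proof -
  have bound: "Y powr p - X powr p \<le> p * \<bar>A - B\<bar> * m powr (p - 1)"
    if "0 \<le> X" "X \<le> Y" "Y \<le> m" "Y - X \<le> \<bar>A - B\<bar>" for X Y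
  proof -
    have "Y powr p - X powr p \<le> p * (Y - X) * Y powr (p - 1)"
      using powr_diff_le[of p X Y] that assms by simp
    also have "\<dots> \<le> p * \<bar>A - B\<bar> * m powr (p - 1)"
      using that assms by (intro mult_mono powr_mono2) auto
    finally show ?thesis .
  qed
  show ?thesis
  proof (cases "\<bar>B\<bar> \<le> \<bar>A\<bar>")
    case True
    then show ?thesis
      using bound[of "\<bar>B\<bar>" "\<bar>A\<bar>"] powr_mono2[of p "\<bar>B\<bar>" "\<bar>A\<bar>"] assms by auto
  next
    case False
    then show ?thesis
      using bound[of "\<bar>A\<bar>" "\<bar>B\<bar>"] powr_mono2[of p "\<bar>A\<bar>" "\<bar>B\<bar>"] assms by auto
  qed
qed

section \<open>Integrability and Hoelder's inequality\<close>

lemma Lp_spaceD: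
  assumes "f \<in> Lp_space M p"
  shows "f \<in> borel_measurable M" "integrable M (\<lambda>z. \<bar>f z\<bar> powr p)"
  using assms by (auto simp: Lp_space_def)

lemma Lp_space_lincomb:
  assumes f: "f \<in> Lp_space M p" and g: "g \<in> Lp_space M p" and p: "0 < p"
  shows "(\<lambda>z. a * f z + b * g z) \<in> Lp_space M p"
proof -
  note [measurable] = Lp_spaceD(1)[OF f] Lp_spaceD(1)[OF g]
  have "integrable M (\<lambda>z. \<bar>a * f z + b * g z\<bar> powr p)"
  proof (rule Bochner_Integration.integrable_bound)
    show "integrable M (\<lambda>z. 2 powr p * (\<bar>a\<bar> powr p * \<bar>f z\<bar> powr p + \<bar>b\<bar> powr p * \<bar>g z\<bar> powr p))"
      using Lp_spaceD(2)[OF f] Lp_spaceD(2)[OF g] by auto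
    show "AE z in M. norm (\<bar>a * f z + b * g z\<bar> powr p)
            \<le> norm (2 powr p * (\<bar>a\<bar> powr p * \<bar>f z\<bar> powr p + \<bar>b\<bar> powr p * \<bar>g z\<bar> powr p))"
      using abs_add_powr_le[of p "a * f _" "b * g _"] p by (simp add: abs_mult powr_mult)
  qed measurable
  then show ?thesis by (simp add: Lp_space_def)
qed

lemma integrable_powr_mult_powr:
  assumes f: "f \<in> Lp_space M p" and g: "g \<in> Lp_space M p" and "0 \<le> \<alpha>" "0 \<le> \<beta>" "\<alpha> + \<beta> = p"
  shows "integrable M (\<lambda>z. \<bar>f z\<bar> powr \<alpha> * \<bar>g z\<bar> powr \<beta>)"
proof (rule Bochner_Integration.integrable_bound)
  note [measurable] = Lp_spaceD(1)[OF f] Lp_spaceD(1)[OF g]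
  show "integrable M (\<lambda>z. \<bar>f z\<bar> powr p + \<bar>g z\<bar> powr p)"
    using Lp_spaceD(2)[OF f] Lp_spaceD(2)[OF g] by auto
  show "AE z in M. norm (\<bar>f z\<bar> powr \<alpha> * \<bar>g z\<bar> powr \<beta>) \<le> norm (\<bar>f z\<bar> powr p + \<bar>g z\<bar> powr p)"
    using powr_mult_powr_le_powr_add[of "\<bar>f _\<bar>" "\<bar>g _\<bar>" \<alpha> \<beta> p] assms by auto
  show "(\<lambda>z. \<bar>f z\<bar> powr \<alpha> * \<bar>g z\<bar> powr \<beta>) \<in> borel_measurable M" by measurable
qed

lemma holder_integral_powr:
  fixes F G :: "'a \<Rightarrow> real"
  assumes F: "integrable M F" "\<And>z. z \<in> space M \<Longrightarrow> 0 \<le> F z"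
    and G: "integrable M G" "\<And>z. z \<in> space M \<Longrightarrow> 0 \<le> G z"
    and \<theta>: "0 < \<theta>" "\<theta> \<le> 1"
  shows "(\<integral>z. F z powr \<theta> * G z powr (1 - \<theta>) \<partial>M) \<le> (integral\<^sup>L M F) powr \<theta> * (integral\<^sup>L M G) powr (1 - \<theta>)"
proof -
  define A where "A = integral\<^sup>L M F"
  define B where "B = integral\<^sup>L M G"
  have "0 \<le> A" "0 \<le> B" unfolding A_def B_def using F G by (auto intro!: integral_nonneg_AE)
  show ?thesis
  proof (cases "A = 0 \<or> B = 0")
    case True
    then have "(AE z in M. F z = 0) \<or> (AE z in M. G z = 0)"
      using integral_nonneg_eq_0_iff_AE[OF F(1)] integral_nonneg_eq_0_iff_AE[OF G(1)] F(2) G(2)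
      unfolding A_def B_def by auto
    then have "AE z in M. F z powr \<theta> * G z powr (1 - \<theta>) = 0"
      by (auto elim: AE_mp)
    then show ?thesis
      by (simp add: integral_eq_zero_AE A_def[symmetric] B_def[symmetric])
  next
    case False
    with \<open>0 \<le> A\<close> \<open>0 \<le> B\<close> have A: "0 < A" and B: "0 < B" by auto
    define c where "c = A powr \<theta> * B powr (1 - \<theta>)"
    have c: "0 < c" using A B by (simp add: c_def)
    have pointwise: "F z powr \<theta> * G z powr (1 - \<theta>) \<le> c * \<theta> / A * F z + c * (1 - \<theta>) / B * G z"
      if z: "z \<in> space M" for z
    proof -
      have "(F z / A) powr \<theta> * (G z / B) powr (1 - \<theta>) \<le> \<theta> * (F z / A) + (1 - \<theta>) * (G z / B)"
        using weighted_geometric_le_arithmetic[of "F z / A" "G z / B" \<theta>] F(2)[OF z] G(2)[OF z] A B \<theta> by auto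
      moreover have "(F z / A) powr \<theta> * (G z / B) powr (1 - \<theta>) = (F z powr \<theta> * G z powr (1 - \<theta>)) / c"
        using F(2)[OF z] G(2)[OF z] A B by (simp add: powr_divide c_def)
      ultimately show ?thesis
        using c by (simp add: divide_le_eq algebra_simps)
    qed
    have "(\<integral>z. F z powr \<theta> * G z powr (1 - \<theta>) \<partial>M) \<le> (\<integral>z. c * \<theta> / A * F z + c * (1 - \<theta>) / B * G z \<partial>M)"
      using F G \<theta> A B c pointwise by (intro integral_mono') auto
    also have "\<dots> = c"
      using F(1) G(1) A B by (simp add: A_def[symmetric] B_def[symmetric] field_simps)
    finally show ?thesis by (simp add: c_def A_def B_def)
  qed
qed

lemma Lp_norm_nonneg: "0 \<le> Lp_norm M p f"
  by (simp add: Lp_norm_def)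

lemma Lp_norm_powr: "0 < p \<Longrightarrow> Lp_norm M p f powr p = (\<integral>z. \<bar>f z\<bar> powr p \<partial>M)"
  unfolding Lp_norm_def by (simp add: powr_powr integral_nonneg_AE)

lemma Lp_norm_power2: "0 < p \<Longrightarrow> (Lp_norm M p f)\<^sup>2 = (\<integral>z. \<bar>f z\<bar> powr p \<partial>M) powr (2 / p)"
  unfolding Lp_norm_def by (simp add: powr_powr flip: powr_numeral)

lemma Lp_norm_less_iff:
  assumes "0 < p" "0 < r"
  shows "Lp_norm M p f < r \<longleftrightarrow> (\<integral>z. \<bar>f z\<bar> powr p \<partial>M) < r powr p"
proof -
  have "Lp_norm M p f < r \<longleftrightarrow> Lp_norm M p f powr p < r powr p"
  proof
    assume "Lp_norm M p f < r"
    then show "Lp_norm M p f powr p < r powr p"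
      using assms Lp_norm_nonneg by (intro powr_less_mono2) auto
  next
    assume "Lp_norm M p f powr p < r powr p"
    then show "Lp_norm M p f < r"
      using assms powr_mono2[of p r "Lp_norm M p f"] by fastforce
  qed
  then show ?thesis by (simp add: Lp_norm_powr[OF assms(1)])
qed

lemma Lp_norm_cong:
  assumes "\<And>z. \<bar>f z\<bar> = \<bar>g z\<bar>"
  shows "Lp_norm M p f = Lp_norm M p g"
  unfolding Lp_norm_def using assms by simp

lemma power2_mult_powr_le:
  fixes e m p :: real
  assumes "\<bar>e\<bar> \<le> 2 * m"
  shows "e\<^sup>2 * m powr (p - 2) \<le> 4 * m powr p"
proof (cases "m = 0")
  case False
  with assms have m: "0 < m" by linarith
  have "e\<^sup>2 \<le> (2 * m)\<^sup>2"
    using assms by (metis abs_ge_zero power2_abs power_mono)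
  then have "e\<^sup>2 * m powr (p - 2) \<le> 4 * (m powr 2 * m powr (p - 2))"
    using m by (simp add: mult_right_mono power2_eq_square)
  also have "m powr 2 * m powr (p - 2) = m powr p"
    by (simp flip: powr_add)
  finally show ?thesis .
qed (use assms in simp)

lemma integrable_abs_powr_taylor_terms:
  assumes a: "a \<in> Lp_space M p" and b: "b \<in> Lp_space M p" and p: "1 < p"
  shows "integrable M (\<lambda>z. p * signed_powr p (a z) * (b z - a z))"
    and "integrable M (\<lambda>z. max \<bar>a z\<bar> \<bar>b z\<bar> powr p)"
    and "integrable M (\<lambda>z. (b z - a z)\<^sup>2 * max \<bar>a z\<bar> \<bar>b z\<bar> powr (p - 2))"
proof -
  note [measurable] = Lp_spaceD(1)[OF a] Lp_spaceD(1)[OF b]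
  have ba: "(\<lambda>z. b z - a z) \<in> Lp_space M p"
    using Lp_space_lincomb[OF b a, of 1 "-1"] p by simp
  show "integrable M (\<lambda>z. p * signed_powr p (a z) * (b z - a z))"
  proof (rule Bochner_Integration.integrable_bound)
    show "integrable M (\<lambda>z. p * (\<bar>a z\<bar> powr (p - 1) * \<bar>b z - a z\<bar> powr 1))"
      using integrable_powr_mult_powr[OF a ba, of "p - 1" 1] p by auto
    show "(\<lambda>z. p * signed_powr p (a z) * (b z - a z)) \<in> borel_measurable M"
      unfolding signed_powr_def by measurable
    show "AE z in M. norm (p * signed_powr p (a z) * (b z - a z))
            \<le> norm (p * (\<bar>a z\<bar> powr (p - 1) * \<bar>b z - a z\<bar> powr 1))"
      using p abs_signed_powr by (auto simp: abs_mult intro!: mult_right_mono)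
  qed
  show max: "integrable M (\<lambda>z. max \<bar>a z\<bar> \<bar>b z\<bar> powr p)"
  proof (rule Bochner_Integration.integrable_bound)
    show "integrable M (\<lambda>z. \<bar>a z\<bar> powr p + \<bar>b z\<bar> powr p)"
      using Lp_spaceD(2)[OF a] Lp_spaceD(2)[OF b] by auto
  qed (auto simp: max_def)
  show "integrable M (\<lambda>z. (b z - a z)\<^sup>2 * max \<bar>a z\<bar> \<bar>b z\<bar> powr (p - 2))"
  proof (rule Bochner_Integration.integrable_bound)
    show "integrable M (\<lambda>z. 4 * max \<bar>a z\<bar> \<bar>b z\<bar> powr p)"
      using max by auto
    show "AE z in M. norm ((b z - a z)\<^sup>2 * max \<bar>a z\<bar> \<bar>b z\<bar> powr (p - 2))
            \<le> norm (4 * max \<bar>a z\<bar> \<bar>b z\<bar> powr p)"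
      by (intro AE_I2) (simp add: power2_mult_powr_le)
  qed measurable
qed

lemma integral_abs_powr_taylor_le:
  assumes a: "a \<in> Lp_space M p" and b: "b \<in> Lp_space M p" and p: "2 \<le> p"
    and B: "(\<integral>z. max \<bar>a z\<bar> \<bar>b z\<bar> powr p \<partial>M) \<le> B"
  shows "(\<integral>z. \<bar>b z\<bar> powr p \<partial>M) - (\<integral>z. \<bar>a z\<bar> powr p \<partial>M) - (\<integral>z. p * signed_powr p (a z) * (b z - a z) \<partial>M)
           \<le> p * (p - 1) / 2 * (\<integral>z. \<bar>b z - a z\<bar> powr p \<partial>M) powr (2 / p) * B powr (1 - 2 / p)"
proof -
  have "1 < p" using p by simp
  note I = integrable_abs_powr_taylor_terms[OF a b this] Lp_spaceD(2)[OF a] Lp_spaceD(2)[OF b]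
  have ba: "(\<lambda>z. b z - a z) \<in> Lp_space M p"
    using Lp_space_lincomb[OF b a, of 1 "-1"] p by simp
  have holder_factors: "(\<integral>z. (b z - a z)\<^sup>2 * max \<bar>a z\<bar> \<bar>b z\<bar> powr (p - 2) \<partial>M)
      = (\<integral>z. (\<bar>b z - a z\<bar> powr p) powr (2 / p) * (max \<bar>a z\<bar> \<bar>b z\<bar> powr p) powr (1 - 2 / p) \<partial>M)"
    using p by (intro Bochner_Integration.integral_cong) (simp_all add: powr_powr algebra_simps)
  have "(\<integral>z. \<bar>b z\<bar> powr p \<partial>M) - (\<integral>z. \<bar>a z\<bar> powr p \<partial>M) - (\<integral>z. p * signed_powr p (a z) * (b z - a z) \<partial>M)
      = (\<integral>z. \<bar>b z\<bar> powr p - \<bar>a z\<bar> powr p - p * signed_powr p (a z) * (b z - a z) \<partial>M)"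
    using I p by simp
  also have "\<dots> \<le> (\<integral>z. p * (p - 1) / 2 * ((b z - a z)\<^sup>2 * max \<bar>a z\<bar> \<bar>b z\<bar> powr (p - 2)) \<partial>M)"
  proof (rule integral_mono')
    show "\<bar>b z\<bar> powr p - \<bar>a z\<bar> powr p - p * signed_powr p (a z) * (b z - a z)
            \<le> p * (p - 1) / 2 * ((b z - a z)\<^sup>2 * max \<bar>a z\<bar> \<bar>b z\<bar> powr (p - 2))" for z
      using abs_powr_taylor_le[OF p, where a = "a z" and e = "b z - a z"] by (simp add: mult.assoc)
  qed (use I p in auto)
  also have "\<dots> = p * (p - 1) / 2 * (\<integral>z. (\<bar>b z - a z\<bar> powr p) powr (2 / p) * (max \<bar>a z\<bar> \<bar>b z\<bar> powr p) powr (1 - 2 / p) \<partial>M)"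
    using holder_factors by simp
  also have "\<dots> \<le> p * (p - 1) / 2 * ((\<integral>z. \<bar>b z - a z\<bar> powr p \<partial>M) powr (2 / p) * (\<integral>z. max \<bar>a z\<bar> \<bar>b z\<bar> powr p \<partial>M) powr (1 - 2 / p))"
    using p Lp_spaceD(2)[OF ba] I by (intro mult_left_mono holder_integral_powr) auto
  also have "\<dots> \<le> p * (p - 1) / 2 * ((\<integral>z. \<bar>b z - a z\<bar> powr p \<partial>M) powr (2 / p) * B powr (1 - 2 / p))"
    using p B by (intro mult_left_mono powr_mono2) (auto intro!: integral_nonneg_AE)
  finally show ?thesis by (simp add: mult.assoc)
qed

lemma abs_powr_eq_holder_factors:
  fixes e m p :: real
  assumes "\<bar>e\<bar> \<le> 2 * m" "0 < p"
  shows "\<bar>e\<bar> powr p = (e\<^sup>2 * m powr (p - 2)) powr (p / 2) * (m powr p) powr (1 - p / 2)"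
proof (cases "m = 0")
  case False
  with assms have m: "0 < m" by linarith
  have "(e\<^sup>2 * m powr (p - 2)) powr (p / 2) * (m powr p) powr (1 - p / 2)
      = \<bar>e\<bar> powr p * (m powr ((p - 2) * (p / 2)) * m powr (p * (1 - p / 2)))"
    by (simp add: powr_mult powr_powr abs_powr_eq_power2_powr[of e p])
  also have "m powr ((p - 2) * (p / 2)) * m powr (p * (1 - p / 2)) = m powr 0"
    by (simp flip: powr_add add: field_simps)
  finally show ?thesis using m by simp
qed (use assms in simp)

lemma holder_bound_rearrange:
  fixes E Q B p :: real
  assumes "0 < p" "p \<le> 2" "0 \<le> E" "0 \<le> Q" "0 \<le> B"
    and holder: "E \<le> Q powr (p / 2) * B powr (1 - p / 2)"
  shows "E powr (2 / p) * B powr ((p - 2) / p) \<le> Q"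
proof (cases "B = 0")
  case False
  with assms have "0 < B" by simp
  have "E powr (2 / p) \<le> (Q powr (p / 2) * B powr (1 - p / 2)) powr (2 / p)"
    using assms by (intro powr_mono2) auto
  also have "\<dots> = Q * B powr (2 / p - 1)"
    using assms by (simp add: powr_mult powr_powr algebra_simps)
  finally have "E powr (2 / p) * B powr ((p - 2) / p) \<le> Q * (B powr (2 / p - 1) * B powr ((p - 2) / p))"
    by (simp add: mult.assoc[symmetric] mult_right_mono)
  also have "B powr (2 / p - 1) * B powr ((p - 2) / p) = B powr 0"
    using assms by (simp flip: powr_add add: field_simps)
  finally show ?thesis using \<open>0 < B\<close> by simp
qed (use assms in simp)

lemma integral_abs_powr_taylor_ge:
  assumes a: "a \<in> Lp_space M p" and b: "b \<in> Lp_space M p" and p: "1 < p" "p \<le> 2"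
    and B: "(\<integral>z. max \<bar>a z\<bar> \<bar>b z\<bar> powr p \<partial>M) \<le> B"
  shows "p * (p - 1) / 2 * (\<integral>z. \<bar>b z - a z\<bar> powr p \<partial>M) powr (2 / p) * B powr ((p - 2) / p)
           \<le> (\<integral>z. \<bar>b z\<bar> powr p \<partial>M) - (\<integral>z. \<bar>a z\<bar> powr p \<partial>M) - (\<integral>z. p * signed_powr p (a z) * (b z - a z) \<partial>M)"
proof -
  note I = integrable_abs_powr_taylor_terms[OF a b p(1)] Lp_spaceD(2)[OF a] Lp_spaceD(2)[OF b]
  define Q where "Q = (\<integral>z. (b z - a z)\<^sup>2 * max \<bar>a z\<bar> \<bar>b z\<bar> powr (p - 2) \<partial>M)"
  define E where "E = (\<integral>z. \<bar>b z - a z\<bar> powr p \<partial>M)"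
  define B0 where "B0 = (\<integral>z. max \<bar>a z\<bar> \<bar>b z\<bar> powr p \<partial>M)"
  have "0 \<le> Q" "0 \<le> E" "0 \<le> B0"
    unfolding Q_def E_def B0_def by (auto intro!: integral_nonneg_AE)
  have "p * (p - 1) / 2 * Q = (\<integral>z. p * (p - 1) / 2 * ((b z - a z)\<^sup>2 * max \<bar>a z\<bar> \<bar>b z\<bar> powr (p - 2)) \<partial>M)"
    by (simp add: Q_def)
  also have "\<dots> \<le> (\<integral>z. \<bar>b z\<bar> powr p - \<bar>a z\<bar> powr p - p * signed_powr p (a z) * (b z - a z) \<partial>M)"
  proof (rule integral_mono)
    show "p * (p - 1) / 2 * ((b z - a z)\<^sup>2 * max \<bar>a z\<bar> \<bar>b z\<bar> powr (p - 2))
            \<le> \<bar>b z\<bar> powr p - \<bar>a z\<bar> powr p - p * signed_powr p (a z) * (b z - a z)" for z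
      using abs_powr_taylor_ge[OF p, where a = "a z" and e = "b z - a z"] by (simp add: mult.assoc)
  qed (use I in auto)
  also have "\<dots> = (\<integral>z. \<bar>b z\<bar> powr p \<partial>M) - (\<integral>z. \<bar>a z\<bar> powr p \<partial>M) - (\<integral>z. p * signed_powr p (a z) * (b z - a z) \<partial>M)"
    using I by simp
  finally have taylor: "p * (p - 1) / 2 * Q \<le> \<dots>" .
  have "E = (\<integral>z. ((b z - a z)\<^sup>2 * max \<bar>a z\<bar> \<bar>b z\<bar> powr (p - 2)) powr (p / 2) * (max \<bar>a z\<bar> \<bar>b z\<bar> powr p) powr (1 - p / 2) \<partial>M)"
    unfolding E_def using p by (intro Bochner_Integration.integral_cong abs_powr_eq_holder_factors) auto
  also have "\<dots> \<le> Q powr (p / 2) * B0 powr (1 - p / 2)"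
    unfolding Q_def B0_def using I p by (intro holder_integral_powr) auto
  also have "\<dots> \<le> Q powr (p / 2) * B powr (1 - p / 2)"
    using p B \<open>0 \<le> B0\<close> unfolding B0_def[symmetric] by (intro mult_left_mono powr_mono2) auto
  finally have holder: "E \<le> Q powr (p / 2) * B powr (1 - p / 2)" .
  have "E powr (2 / p) * B powr ((p - 2) / p) \<le> Q"
    using holder_bound_rearrange[OF _ p(2) \<open>0 \<le> E\<close> \<open>0 \<le> Q\<close> _ holder] p B \<open>0 \<le> B0\<close>
    unfolding B0_def by simp
  then have "p * (p - 1) / 2 * (E powr (2 / p) * B powr ((p - 2) / p)) \<le> p * (p - 1) / 2 * Q"
    using p by (intro mult_left_mono) auto
  with taylor show ?thesis by (simp add: E_def mult.assoc)
qed

section \<open>The integral of \<open>\<bar>f + t h\<bar> powr p\<close> along a line\<close>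

definition powr_line :: "'a measure \<Rightarrow> real \<Rightarrow> ('a \<Rightarrow> real) \<Rightarrow> ('a \<Rightarrow> real) \<Rightarrow> real \<Rightarrow> real" where
  "powr_line M p f h t = (\<integral>z. \<bar>f z + t * h z\<bar> powr p \<partial>M)"

definition powr_line_slope :: "'a measure \<Rightarrow> real \<Rightarrow> ('a \<Rightarrow> real) \<Rightarrow> ('a \<Rightarrow> real) \<Rightarrow> real \<Rightarrow> real" where
  "powr_line_slope M p f h t = (\<integral>z. p * signed_powr p (f z + t * h z) * h z \<partial>M)"

text \<open>\<^const>\<open>powr_line_slope\<close> plays the role of the derivative of \<^const>\<open>powr_line\<close>, but
  differentiability is never proved: only the second-order bounds around it are needed.\<close>

definition powr_line_lip :: "'a measure \<Rightarrow> real \<Rightarrow> ('a \<Rightarrow> real) \<Rightarrow> ('a \<Rightarrow> real) \<Rightarrow> real" where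
  "powr_line_lip M p f h = p * (\<integral>z. \<bar>h z\<bar> * (\<bar>f z\<bar> + \<bar>h z\<bar>) powr (p - 1) \<partial>M)"

lemma powr_line_nonneg: "0 \<le> powr_line M p f h t"
  by (simp add: powr_line_def integral_nonneg_AE)

lemma powr_line_lip_nonneg: "0 < p \<Longrightarrow> 0 \<le> powr_line_lip M p f h"
  by (simp add: powr_line_lip_def integral_nonneg_AE)

lemma Lp_space_line:
  assumes "f \<in> Lp_space M p" "h \<in> Lp_space M p" "0 < p"
  shows "(\<lambda>z. f z + t * h z) \<in> Lp_space M p"
  using Lp_space_lincomb[OF assms, of 1 t] by simp

lemma integrable_powr_line_lip:
  assumes f: "f \<in> Lp_space M p" and h: "h \<in> Lp_space M p" and p: "1 < p"
  shows "integrable M (\<lambda>z. \<bar>h z\<bar> * (\<bar>f z\<bar> + \<bar>h z\<bar>) powr (p - 1))"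
proof (rule Bochner_Integration.integrable_bound)
  note [measurable] = Lp_spaceD(1)[OF f] Lp_spaceD(1)[OF h]
  show "integrable M (\<lambda>z. \<bar>h z\<bar> powr p + 2 powr p * (\<bar>f z\<bar> powr p + \<bar>h z\<bar> powr p))"
    using Lp_spaceD(2)[OF f] Lp_spaceD(2)[OF h] by auto
  show "(\<lambda>z. \<bar>h z\<bar> * (\<bar>f z\<bar> + \<bar>h z\<bar>) powr (p - 1)) \<in> borel_measurable M" by measurable
  have "\<bar>h z\<bar> * (\<bar>f z\<bar> + \<bar>h z\<bar>) powr (p - 1) \<le> \<bar>h z\<bar> powr p + \<bar>\<bar>f z\<bar> + \<bar>h z\<bar>\<bar> powr p" for z
    using powr_mult_powr_le_powr_add[of "\<bar>h z\<bar>" "\<bar>\<bar>f z\<bar> + \<bar>h z\<bar>\<bar>" 1 "p - 1" p] p by simp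
  moreover have "\<bar>\<bar>f z\<bar> + \<bar>h z\<bar>\<bar> powr p \<le> 2 powr p * (\<bar>f z\<bar> powr p + \<bar>h z\<bar> powr p)" for z
    using abs_add_powr_le[of p "\<bar>f z\<bar>" "\<bar>h z\<bar>"] p by simp
  ultimately have "\<bar>h z\<bar> * (\<bar>f z\<bar> + \<bar>h z\<bar>) powr (p - 1) \<le> \<bar>h z\<bar> powr p + 2 powr p * (\<bar>f z\<bar> powr p + \<bar>h z\<bar> powr p)" for z
    by (meson add_left_mono order_trans)
  then show "AE z in M. norm (\<bar>h z\<bar> * (\<bar>f z\<bar> + \<bar>h z\<bar>) powr (p - 1))
      \<le> norm (\<bar>h z\<bar> powr p + 2 powr p * (\<bar>f z\<bar> powr p + \<bar>h z\<bar> powr p))"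
    by (intro AE_I2) (auto simp: abs_mult intro: order_trans[OF _ abs_ge_self])
qed

lemma powr_line_lip_pos:
  assumes f: "f \<in> Lp_space M p" and h: "h \<in> Lp_space M p" and p: "1 < p"
    and "0 < (\<integral>z. \<bar>h z\<bar> powr p \<partial>M)"
  shows "0 < powr_line_lip M p f h"
proof -
  have "(\<integral>z. \<bar>h z\<bar> powr p \<partial>M) \<le> (\<integral>z. \<bar>h z\<bar> * (\<bar>f z\<bar> + \<bar>h z\<bar>) powr (p - 1) \<partial>M)"
  proof (rule integral_mono)
    show "\<bar>h z\<bar> powr p \<le> \<bar>h z\<bar> * (\<bar>f z\<bar> + \<bar>h z\<bar>) powr (p - 1)" for z
      using powr_eq_mult_powr_diff_one[of "\<bar>h z\<bar>" p] p by (auto intro!: mult_left_mono powr_mono2)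
  qed (use Lp_spaceD(2)[OF h] integrable_powr_line_lip[OF f h p] in auto)
  with assms show ?thesis by (simp add: powr_line_lip_def)
qed

lemma abs_powr_line_diff_le:
  fixes f h s t p :: real
  assumes "1 \<le> p" "\<bar>s\<bar> \<le> 1" "\<bar>t\<bar> \<le> 1"
  shows "\<bar>\<bar>f + t * h\<bar> powr p - \<bar>f + s * h\<bar> powr p\<bar> \<le> \<bar>t - s\<bar> * (p * (\<bar>h\<bar> * (\<bar>f\<bar> + \<bar>h\<bar>) powr (p - 1)))"
proof -
  have "\<bar>f + \<tau> * h\<bar> \<le> \<bar>f\<bar> + \<bar>h\<bar>" if "\<bar>\<tau>\<bar> \<le> 1" for \<tau>
    using that abs_triangle_ineq[of f "\<tau> * h"] mult_left_le_one_le[of "\<bar>h\<bar>" "\<bar>\<tau>\<bar>"] by (simp add: abs_mult)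
  then have "\<bar>\<bar>f + t * h\<bar> powr p - \<bar>f + s * h\<bar> powr p\<bar> \<le> p * \<bar>(f + t * h) - (f + s * h)\<bar> * (\<bar>f\<bar> + \<bar>h\<bar>) powr (p - 1)"
    using assms by (intro abs_powr_diff_le) auto
  also have "\<bar>(f + t * h) - (f + s * h)\<bar> = \<bar>t - s\<bar> * \<bar>h\<bar>"
    by (simp add: algebra_simps flip: abs_mult)
  finally show ?thesis by (simp add: mult_ac)
qed

lemma powr_line_lipschitz:
  assumes f: "f \<in> Lp_space M p" and h: "h \<in> Lp_space M p" and p: "1 < p"
    and st: "\<bar>s\<bar> \<le> 1" "\<bar>t\<bar> \<le> 1"
  shows "\<bar>powr_line M p f h t - powr_line M p f h s\<bar> \<le> powr_line_lip M p f h * \<bar>t - s\<bar>"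
proof -
  note I = Lp_spaceD(2)[OF Lp_space_line[OF f h]] integrable_powr_line_lip[OF f h p]
  have "\<bar>powr_line M p f h t - powr_line M p f h s\<bar>
      = \<bar>\<integral>z. \<bar>f z + t * h z\<bar> powr p - \<bar>f z + s * h z\<bar> powr p \<partial>M\<bar>"
    using I p by (simp add: powr_line_def)
  also have "\<dots> \<le> (\<integral>z. \<bar>\<bar>f z + t * h z\<bar> powr p - \<bar>f z + s * h z\<bar> powr p\<bar> \<partial>M)"
    using integral_norm_bound[of M "\<lambda>z. \<bar>f z + t * h z\<bar> powr p - \<bar>f z + s * h z\<bar> powr p"] by simp
  also have "\<dots> \<le> (\<integral>z. \<bar>t - s\<bar> * (p * (\<bar>h z\<bar> * (\<bar>f z\<bar> + \<bar>h z\<bar>) powr (p - 1))) \<partial>M)"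
    using I p st abs_powr_line_diff_le[of p s t] by (intro integral_mono') auto
  also have "\<dots> = powr_line_lip M p f h * \<bar>t - s\<bar>"
    by (simp add: powr_line_lip_def)
  finally show ?thesis .
qed

lemma continuous_on_powr_line:
  assumes f: "f \<in> Lp_space M p" and h: "h \<in> Lp_space M p" and p: "1 < p"
  shows "continuous_on {-1..1} (powr_line M p f h)"
proof (rule lipschitz_on_continuous_on)
  show "(powr_line_lip M p f h)-lipschitz_on {-1..1} (powr_line M p f h)"
    using powr_line_lipschitz[OF f h p] powr_line_lip_nonneg[of p] p
    by (intro lipschitz_onI) (auto simp: dist_real_def)
qed

lemma integral_max_powr_line_le:
  assumes f: "f \<in> Lp_space M p" and h: "h \<in> Lp_space M p" and p: "1 < p"
    and st: "\<bar>s\<bar> \<le> 1" "\<bar>t\<bar> \<le> 1"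
  shows "(\<integral>z. max \<bar>f z + s * h z\<bar> \<bar>f z + t * h z\<bar> powr p \<partial>M)
           \<le> powr_line M p f h s + powr_line_lip M p f h * \<bar>t - s\<bar>"
proof -
  note I = Lp_spaceD(2)[OF Lp_space_line[OF f h]] integrable_powr_line_lip[OF f h p]
  have "max \<bar>f z + s * h z\<bar> \<bar>f z + t * h z\<bar> powr p
          \<le> \<bar>f z + s * h z\<bar> powr p + \<bar>t - s\<bar> * (p * (\<bar>h z\<bar> * (\<bar>f z\<bar> + \<bar>h z\<bar>) powr (p - 1)))" for z
    using abs_le_D1[OF abs_powr_line_diff_le[of p s t "f z" "h z"]] p st by (auto simp: max_def)
  then have "(\<integral>z. max \<bar>f z + s * h z\<bar> \<bar>f z + t * h z\<bar> powr p \<partial>M)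
      \<le> (\<integral>z. \<bar>f z + s * h z\<bar> powr p + \<bar>t - s\<bar> * (p * (\<bar>h z\<bar> * (\<bar>f z\<bar> + \<bar>h z\<bar>) powr (p - 1))) \<partial>M)"
    using I p by (intro integral_mono') auto
  also have "\<dots> = powr_line M p f h s + powr_line_lip M p f h * \<bar>t - s\<bar>"
    using I p by (simp add: powr_line_def powr_line_lip_def)
  finally show ?thesis .
qed

lemma powr_line_increments:
  assumes f: "f \<in> Lp_space M p" and h: "h \<in> Lp_space M p" and p: "1 < p"
  shows "(\<integral>z. p * signed_powr p (f z + s * h z) * ((f z + t * h z) - (f z + s * h z)) \<partial>M)
           = powr_line_slope M p f h s * (t - s)"
    and "(\<integral>z. \<bar>(f z + t * h z) - (f z + s * h z)\<bar> powr p \<partial>M) powr (2 / p)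
           = (t - s)\<^sup>2 * (\<integral>z. \<bar>h z\<bar> powr p \<partial>M) powr (2 / p)"
proof -
  have "(\<integral>z. p * signed_powr p (f z + s * h z) * ((f z + t * h z) - (f z + s * h z)) \<partial>M)
      = (\<integral>z. (t - s) * (p * signed_powr p (f z + s * h z) * h z) \<partial>M)"
    by (intro Bochner_Integration.integral_cong) (auto simp: algebra_simps)
  then show "(\<integral>z. p * signed_powr p (f z + s * h z) * ((f z + t * h z) - (f z + s * h z)) \<partial>M)
      = powr_line_slope M p f h s * (t - s)"
    by (simp add: powr_line_slope_def)
  have "(\<integral>z. \<bar>(f z + t * h z) - (f z + s * h z)\<bar> powr p \<partial>M) = (\<integral>z. \<bar>t - s\<bar> powr p * \<bar>h z\<bar> powr p \<partial>M)"
    by (intro Bochner_Integration.integral_cong) (auto simp: algebra_simps simp flip: abs_mult powr_mult)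
  then show "(\<integral>z. \<bar>(f z + t * h z) - (f z + s * h z)\<bar> powr p \<partial>M) powr (2 / p)
      = (t - s)\<^sup>2 * (\<integral>z. \<bar>h z\<bar> powr p \<partial>M) powr (2 / p)"
    using p by (simp add: powr_mult powr_powr)
qed

lemma powr_line_upper:
  assumes f: "f \<in> Lp_space M p" and h: "h \<in> Lp_space M p" and p: "2 \<le> p"
    and st: "\<bar>s\<bar> \<le> 1" "\<bar>t\<bar> \<le> 1"
  shows "powr_line M p f h t \<le> powr_line M p f h s + powr_line_slope M p f h s * (t - s)
           + p * (p - 1) / 2 * (t - s)\<^sup>2 * (\<integral>z. \<bar>h z\<bar> powr p \<partial>M) powr (2 / p)
               * (powr_line M p f h s + powr_line_lip M p f h * \<bar>t - s\<bar>) powr (1 - 2 / p)"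
proof -
  have p1: "1 < p" using p by simp
  show ?thesis
    using integral_abs_powr_taylor_le[OF Lp_space_line[OF f h] Lp_space_line[OF f h] p
            integral_max_powr_line_le[OF f h p1 st]] p1
    unfolding powr_line_increments[OF f h p1] by (simp add: powr_line_def field_simps)
qed

lemma powr_line_lower:
  assumes f: "f \<in> Lp_space M p" and h: "h \<in> Lp_space M p" and p: "1 < p" "p \<le> 2"
    and st: "\<bar>s\<bar> \<le> 1" "\<bar>t\<bar> \<le> 1"
  shows "powr_line M p f h s + powr_line_slope M p f h s * (t - s)
           + p * (p - 1) / 2 * (t - s)\<^sup>2 * (\<integral>z. \<bar>h z\<bar> powr p \<partial>M) powr (2 / p)
               * (powr_line M p f h s + powr_line_lip M p f h * \<bar>t - s\<bar>) powr ((p - 2) / p)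
         \<le> powr_line M p f h t"
  using integral_abs_powr_taylor_ge[OF Lp_space_line[OF f h] Lp_space_line[OF f h] p
          integral_max_powr_line_le[OF f h p(1) st]] p
  unfolding powr_line_increments[OF f h p(1)] by (simp add: powr_line_def field_simps)

lemma powr_line_convex:
  assumes f: "f \<in> Lp_space M p" and h: "h \<in> Lp_space M p" and p: "1 < p" and t: "\<bar>t\<bar> \<le> 1"
  shows "powr_line M p f h t \<le> (1 + t) / 2 * powr_line M p f h 1 + (1 - t) / 2 * powr_line M p f h (-1)"
proof -
  have I: "integrable M (\<lambda>z. \<bar>f z + \<tau> * h z\<bar> powr p)" for \<tau>
    using Lp_spaceD(2)[OF Lp_space_line[OF f h]] p by simp
  define l where "l = (1 + t) / 2"
  have l: "0 \<le> l" "l \<le> 1" "1 - l = (1 - t) / 2" using t by (auto simp: l_def field_simps)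
  have "powr_line M p f h t
      \<le> (\<integral>z. l * \<bar>f z + 1 * h z\<bar> powr p + (1 - l) * \<bar>f z + (-1) * h z\<bar> powr p \<partial>M)"
    unfolding powr_line_def
  proof (rule integral_mono')
    show "integrable M (\<lambda>z. l * \<bar>f z + 1 * h z\<bar> powr p + (1 - l) * \<bar>f z + (-1) * h z\<bar> powr p)"
      using I[of 1] I[of "-1"] by simp
    fix z
    have "f z + t * h z = l * (f z + 1 * h z) + (1 - l) * (f z + (-1) * h z)"
      by (simp add: l_def field_simps)
    then show "\<bar>f z + t * h z\<bar> powr p \<le> l * \<bar>f z + 1 * h z\<bar> powr p + (1 - l) * \<bar>f z + (-1) * h z\<bar> powr p"
      using abs_powr_convex_comb[OF p l(1,2)] by simp
  qed (use l in simp)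
  also have "\<dots> = l * powr_line M p f h 1 + (1 - l) * powr_line M p f h (-1)"
    using I[of 1] I[of "-1"] by (simp add: powr_line_def)
  finally show ?thesis by (simp add: l_def field_simps)
qed

section \<open>From local to global quadratic bounds\<close>

lemma le_of_uniform_local_increment_le:
  fixes F :: "real \<Rightarrow> real"
  assumes local: "\<And>\<epsilon>. 0 < \<epsilon> \<Longrightarrow> \<exists>\<eta>>0. \<forall>x y. s \<le> x \<longrightarrow> x < y \<longrightarrow> y \<le> t \<longrightarrow> y - x < \<eta> \<longrightarrow> F y - F x \<le> \<epsilon> * (y - x)"
    and "s \<le> t"
  shows "F t \<le> F s"
proof (cases "s = t")
  case False
  define L where "L = t - s"
  have L: "0 < L" using False \<open>s \<le> t\<close> by (simp add: L_def)
  have "F t - F s \<le> \<epsilon> * L" if \<epsilon>: "0 < \<epsilon>" for \<epsilon>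
  proof -
    obtain \<eta> where \<eta>: "0 < \<eta>" "\<And>x y. s \<le> x \<Longrightarrow> x < y \<Longrightarrow> y \<le> t \<Longrightarrow> y - x < \<eta> \<Longrightarrow> F y - F x \<le> \<epsilon> * (y - x)"
      using local[OF \<epsilon>] by blast
    obtain n :: nat where n: "L / \<eta> < n" using reals_Archimedean2 by blast
    with L \<eta> have n0: "0 < real n" by (smt (verit) divide_pos_pos)
    with n \<eta> have step: "L / n < \<eta>" by (simp add: field_simps)
    define \<delta> where "\<delta> = L / n"
    have \<delta>: "0 < \<delta>" "real n * \<delta> = L" "\<delta> < \<eta>"
      using L n0 step by (simp_all add: \<delta>_def)
    define x where "x i = s + real i * \<delta>" for i
    have "x n = t" "x 0 = s" using \<delta> by (simp_all add: x_def L_def)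
    then have "F t - F s = (\<Sum>i<n. F (x (Suc i)) - F (x i))"
      using sum_lessThan_telescope[of "\<lambda>i. F (x i)" n] by simp
    also have "\<dots> \<le> (\<Sum>i<n. \<epsilon> * \<delta>)"
    proof (rule sum_mono)
      fix i assume "i \<in> {..<n}"
      then have "real (Suc i) * \<delta> \<le> real n * \<delta>"
        using \<delta> by (intro mult_right_mono) auto
      then have "s \<le> x i" "x (Suc i) \<le> t" "x (Suc i) - x i = \<delta>"
        using \<delta> by (auto simp: x_def L_def algebra_simps)
      then show "F (x (Suc i)) - F (x i) \<le> \<epsilon> * \<delta>"
        using \<eta>(2)[of "x i" "x (Suc i)"] \<delta> by simp
    qed
    also have "\<dots> = \<epsilon> * L" using \<delta> by simp
    finally show ?thesis .
  qed
  from this[of "e / L" for e] L have "F t - F s \<le> e" if "0 < e" for e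
    using that by simp
  then show ?thesis by (metis diff_le_0_iff_le field_le_epsilon add_0)
qed simp

lemma tendsto_zero_at_right_bound:
  fixes \<rho> :: "real \<Rightarrow> real"
  assumes "(\<rho> \<longlongrightarrow> 0) (at_right 0)" "0 < \<epsilon>"
  obtains \<eta> where "0 < \<eta>" "\<And>h. 0 < h \<Longrightarrow> h < \<eta> \<Longrightarrow> \<bar>\<rho> h\<bar> \<le> \<epsilon>"
proof -
  have "\<forall>\<^sub>F h in at_right 0. dist (\<rho> h) 0 < \<epsilon>"
    using assms by (rule tendstoD)
  then show ?thesis
    using that by (auto simp: eventually_at_right_field dist_real_def intro: less_imp_le)
qed

lemma local_quadratic_bound_slope_le:
  fixes g D \<rho> :: "real \<Rightarrow> real"
  assumes local: "\<And>x y. x \<in> {a..b} \<Longrightarrow> y \<in> {a..b} \<Longrightarrow>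
                    g y \<le> g x + D x * (y - x) + (K / 2 + \<rho> \<bar>y - x\<bar>) * (y - x)\<^sup>2"
    and \<rho>: "(\<rho> \<longlongrightarrow> 0) (at_right 0)"
    and st: "a \<le> s" "s \<le> t" "t \<le> b"
  shows "D t - D s \<le> K * (t - s)"
proof -
  have "D t - K * t \<le> D s - K * s"
  proof (rule le_of_uniform_local_increment_le[OF _ \<open>s \<le> t\<close>])
    fix \<epsilon> :: real assume "0 < \<epsilon>"
    then obtain \<eta> where \<eta>: "0 < \<eta>" "\<And>h. 0 < h \<Longrightarrow> h < \<eta> \<Longrightarrow> \<bar>\<rho> h\<bar> \<le> \<epsilon> / 2"
      using tendsto_zero_at_right_bound[OF \<rho>, of "\<epsilon> / 2"] by auto
    show "\<exists>\<eta>>0. \<forall>x y. s \<le> x \<longrightarrow> x < y \<longrightarrow> y \<le> t \<longrightarrow> y - x < \<eta> \<longrightarrow>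
            (D y - K * y) - (D x - K * x) \<le> \<epsilon> * (y - x)"
    proof (intro exI[of _ \<eta>] conjI allI impI)
      fix x y assume xy: "s \<le> x" "x < y" "y \<le> t" "y - x < \<eta>"
      have "(D y - D x) * (y - x) \<le> (K + 2 * \<rho> (y - x)) * (y - x)\<^sup>2"
        using local[of x y] local[of y x] xy st by (simp add: power2_commute abs_minus_commute algebra_simps)
      also have "\<dots> \<le> (K + \<epsilon>) * (y - x)\<^sup>2"
        using \<eta>(2)[of "y - x"] xy by (intro mult_right_mono) auto
      finally have "(D y - D x) * (y - x) \<le> ((K + \<epsilon>) * (y - x)) * (y - x)"
        by (simp add: power2_eq_square mult.assoc)
      then have "D y - D x \<le> (K + \<epsilon>) * (y - x)"
        using xy by (simp add: mult_le_cancel_right)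
      then show "(D y - K * y) - (D x - K * x) \<le> \<epsilon> * (y - x)"
        by (simp add: algebra_simps)
    qed (use \<eta> in simp)
  qed
  then show ?thesis by (simp add: algebra_simps)
qed

lemma local_quadratic_bound_forward:
  fixes g D \<rho> :: "real \<Rightarrow> real"
  assumes local: "\<And>x y. x \<in> {a..b} \<Longrightarrow> y \<in> {a..b} \<Longrightarrow>
                    g y \<le> g x + D x * (y - x) + (K / 2 + \<rho> \<bar>y - x\<bar>) * (y - x)\<^sup>2"
    and \<rho>: "(\<rho> \<longlongrightarrow> 0) (at_right 0)"
    and st: "a \<le> s" "s \<le> t" "t \<le> b"
  shows "g t \<le> g s + D s * (t - s) + K / 2 * (t - s)\<^sup>2"
proof -
  define \<Phi> where "\<Phi> \<tau> = g \<tau> - D s * (\<tau> - s) - K / 2 * (\<tau> - s)\<^sup>2" for \<tau>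
  have "\<Phi> t \<le> \<Phi> s"
  proof (rule le_of_uniform_local_increment_le[OF _ \<open>s \<le> t\<close>])
    fix \<epsilon> :: real assume "0 < \<epsilon>"
    then obtain \<eta> where \<eta>: "0 < \<eta>" "\<And>h. 0 < h \<Longrightarrow> h < \<eta> \<Longrightarrow> \<bar>\<rho> h\<bar> \<le> \<epsilon>"
      using tendsto_zero_at_right_bound[OF \<rho>] by auto
    show "\<exists>\<eta>>0. \<forall>x y. s \<le> x \<longrightarrow> x < y \<longrightarrow> y \<le> t \<longrightarrow> y - x < \<eta> \<longrightarrow> \<Phi> y - \<Phi> x \<le> \<epsilon> * (y - x)"
    proof (intro exI[of _ "min \<eta> 1"] conjI allI impI)
      fix x y assume xy: "s \<le> x" "x < y" "y \<le> t" "y - x < min \<eta> 1"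
      define h where "h = y - x"
      have h: "0 < h" "h < 1" "\<bar>\<rho> h\<bar> \<le> \<epsilon>" using xy \<eta> by (auto simp: h_def)
      have "\<Phi> y - \<Phi> x \<le> (D x - D s - K * (x - s)) * h + \<rho> h * h\<^sup>2"
        using local[of x y] xy st unfolding \<Phi>_def h_def by (simp add: power2_eq_square algebra_simps)
      also have "(D x - D s - K * (x - s)) * h \<le> 0"
        using local_quadratic_bound_slope_le[OF local \<rho>, where s = s and t = x] xy st h
        by (intro mult_nonpos_nonneg) (auto simp: algebra_simps)
      also have "\<rho> h * h\<^sup>2 \<le> \<epsilon> * h"
      proof -
        have "\<rho> h * h \<le> \<epsilon> * 1" using h by (intro mult_mono) auto
        then show ?thesis using h by (simp add: power2_eq_square mult_right_mono[of _ _ h] mult.assoc[symmetric])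
      qed
      finally show "\<Phi> y - \<Phi> x \<le> \<epsilon> * (y - x)" by (simp add: h_def)
    qed (use \<eta> in simp)
  qed
  then show ?thesis by (simp add: \<Phi>_def)
qed

lemma local_quadratic_bound_global:
  fixes g D \<rho> :: "real \<Rightarrow> real"
  assumes local: "\<And>x y. x \<in> {a..b} \<Longrightarrow> y \<in> {a..b} \<Longrightarrow>
                    g y \<le> g x + D x * (y - x) + (K / 2 + \<rho> \<bar>y - x\<bar>) * (y - x)\<^sup>2"
    and \<rho>: "(\<rho> \<longlongrightarrow> 0) (at_right 0)"
    and st: "s \<in> {a..b}" "t \<in> {a..b}"
  shows "g t \<le> g s + D s * (t - s) + K / 2 * (t - s)\<^sup>2"
proof (cases "s \<le> t")
  case True
  with local_quadratic_bound_forward[OF local \<rho>] st show ?thesis by auto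
next
  case False
  have "g (- (- t)) \<le> g (- (- s)) + (- D (- (- s))) * ((- t) - (- s)) + K / 2 * ((- t) - (- s))\<^sup>2"
  proof (rule local_quadratic_bound_forward[where g = "\<lambda>\<tau>. g (- \<tau>)" and D = "\<lambda>\<tau>. - D (- \<tau>)" and a = "- b" and b = "- a", OF _ \<rho>])
    fix x y assume "x \<in> {- b..- a}" "y \<in> {- b..- a}"
    then show "g (- y) \<le> g (- x) + - D (- x) * (y - x) + (K / 2 + \<rho> \<bar>y - x\<bar>) * (y - x)\<^sup>2"
      using local[of "- x" "- y"] by (simp add: algebra_simps power2_commute abs_minus_commute)
  qed (use False st in auto)
  then show ?thesis by (simp add: algebra_simps power2_commute)
qed

lemma first_hitting_time:
  fixes g :: "real \<Rightarrow> real"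
  assumes cont: "continuous_on {0..1} g" and g0: "g 0 < c" and g1: "c \<le> g 1"
  obtains \<beta> where "0 < \<beta>" "\<beta> \<le> 1" "g \<beta> = c" "\<And>t. t \<in> {0..\<beta>} \<Longrightarrow> g t \<le> c"
proof -
  define S where "S = {0..1} \<inter> g -` {c}"
  have "closed S"
    unfolding S_def by (rule continuous_closed_preimage[OF cont]) auto
  moreover have "S \<noteq> {}"
    using IVT'[of g 0 c 1] g0 g1 cont by (auto simp: S_def)
  moreover have bdd: "bdd_below S"
    unfolding S_def by (auto intro: bdd_belowI[where m = 0])
  ultimately have "Inf S \<in> S" by (intro closed_contains_Inf)
  then have \<beta>: "0 \<le> Inf S" "Inf S \<le> 1" "g (Inf S) = c" by (auto simp: S_def)
  have "g t \<le> c" if t: "t \<in> {0..Inf S}" for t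
  proof (rule ccontr)
    assume "\<not> g t \<le> c"
    moreover have "continuous_on {0..t} g"
      using t \<beta> by (intro continuous_on_subset[OF cont]) auto
    ultimately obtain t' where t': "0 \<le> t'" "t' \<le> t" "g t' = c"
      using IVT'[of g 0 c t] g0 t by auto
    then have "Inf S \<le> t'"
      using t \<beta> by (intro cInf_lower[OF _ bdd]) (auto simp: S_def)
    with t t' have "t = Inf S" by auto
    with \<beta> \<open>\<not> g t \<le> c\<close> show False by simp
  qed
  moreover have "0 < Inf S"
    using \<beta> g0 by (cases "Inf S = 0") auto
  ultimately show ?thesis using that \<beta> by blast
qed

lemma quadratic_two_sided_bound:
  fixes \<alpha> \<beta> A g0 d k :: real
  assumes "\<alpha> < 0" "0 < \<beta>"
    and "A \<le> g0 + d * \<beta> + k * \<beta>\<^sup>2" "A \<le> g0 + d * \<alpha> + k * \<alpha>\<^sup>2"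
  shows "A - g0 \<le> k * (- \<alpha> * \<beta>)"
proof -
  have "(- \<alpha>) * A + \<beta> * A \<le> (- \<alpha>) * (g0 + d * \<beta> + k * \<beta>\<^sup>2) + \<beta> * (g0 + d * \<alpha> + k * \<alpha>\<^sup>2)"
    using assms by (intro add_mono mult_left_mono) auto
  then have "(\<beta> - \<alpha>) * (A - g0) \<le> (\<beta> - \<alpha>) * (k * (- \<alpha> * \<beta>))"
    by (simp add: power2_eq_square algebra_simps)
  then show ?thesis
    by (rule mult_left_le_imp_le) (use assms in simp)
qed

section \<open>Gap estimates in the two ranges of \<open>p\<close>\<close>

lemma powr_line_gap_le_on_interval:
  assumes f: "f \<in> Lp_space M p" and h: "h \<in> Lp_space M p" and p: "2 \<le> p"
    and \<alpha>\<beta>: "-1 \<le> \<alpha>" "\<alpha> < 0" "0 < \<beta>" "\<beta> \<le> 1" and "0 < A"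
    and below: "\<And>t. t \<in> {\<alpha>..\<beta>} \<Longrightarrow> powr_line M p f h t \<le> A"
    and ends: "powr_line M p f h \<alpha> = A" "powr_line M p f h \<beta> = A"
  shows "A - powr_line M p f h 0 \<le> p * (p - 1) / 2 * A powr (1 - 2 / p) * (\<integral>z. \<bar>h z\<bar> powr p \<partial>M) powr (2 / p)"
proof -
  define g where "g = powr_line M p f h"
  define C where "C = powr_line_lip M p f h"
  define \<theta> where "\<theta> = 1 - 2 / p"
  define c where "c = p * (p - 1) / 2 * (\<integral>z. \<bar>h z\<bar> powr p \<partial>M) powr (2 / p)"
  define K where "K = 2 * c * A powr \<theta>"
  define \<rho> where "\<rho> \<delta> = c * ((A + C * \<delta>) powr \<theta> - A powr \<theta>)" for \<delta>
  have "0 \<le> \<theta>" using p by (simp add: \<theta>_def field_simps)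
  have "0 \<le> c" using p by (simp add: c_def)
  have "0 \<le> C" using p powr_line_lip_nonneg[of p] by (simp add: C_def)
  have local: "g y \<le> g x + powr_line_slope M p f h x * (y - x) + (K / 2 + \<rho> \<bar>y - x\<bar>) * (y - x)\<^sup>2"
    if "x \<in> {\<alpha>..\<beta>}" "y \<in> {\<alpha>..\<beta>}" for x y
  proof -
    have "\<bar>x\<bar> \<le> 1" "\<bar>y\<bar> \<le> 1" using that \<alpha>\<beta> by auto
    from powr_line_upper[OF f h p this]
    have "g y \<le> g x + powr_line_slope M p f h x * (y - x) + c * (y - x)\<^sup>2 * (g x + C * \<bar>y - x\<bar>) powr \<theta>"
      by (simp add: g_def C_def c_def \<theta>_def mult_ac)
    moreover have "(g x + C * \<bar>y - x\<bar>) powr \<theta> \<le> (A + C * \<bar>y - x\<bar>) powr \<theta>"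
      using below[OF that(1)] powr_line_nonneg[of M p f h x] \<open>0 \<le> C\<close> \<open>0 \<le> \<theta>\<close>
      by (intro powr_mono2) (auto simp: g_def)
    then have "c * (y - x)\<^sup>2 * (g x + C * \<bar>y - x\<bar>) powr \<theta> \<le> c * (y - x)\<^sup>2 * (A + C * \<bar>y - x\<bar>) powr \<theta>"
      using \<open>0 \<le> c\<close> by (intro mult_left_mono) auto
    ultimately show ?thesis by (simp add: K_def \<rho>_def algebra_simps)
  qed
  have "(\<rho> \<longlongrightarrow> c * ((A + C * 0) powr \<theta> - A powr \<theta>)) (at_right 0)"
    unfolding \<rho>_def using \<open>0 < A\<close> by (intro tendsto_intros) auto
  then have \<rho>: "(\<rho> \<longlongrightarrow> 0) (at_right 0)" by simp
  have global: "g t \<le> g 0 + powr_line_slope M p f h 0 * t + K / 2 * t\<^sup>2" if "t \<in> {\<alpha>..\<beta>}" for t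
    using local_quadratic_bound_global[where a = \<alpha> and b = \<beta> and s = 0 and t = t, OF local \<rho>] that \<alpha>\<beta>
    by auto
  have "A - g 0 \<le> K / 2 * (- \<alpha> * \<beta>)"
    using global[of \<beta>] global[of \<alpha>] \<alpha>\<beta> ends by (intro quadratic_two_sided_bound) (auto simp: g_def)
  also have "\<dots> \<le> K / 2 * 1"
    using \<alpha>\<beta> \<open>0 \<le> c\<close> mult_le_one[of "- \<alpha>" \<beta>] by (intro mult_left_mono) (auto simp: K_def)
  finally show ?thesis by (simp add: g_def K_def c_def \<theta>_def mult_ac)
qed

lemma powr_line_gap_le:
  assumes f: "f \<in> Lp_space M p" and h: "h \<in> Lp_space M p" and p: "2 \<le> p"
    and A: "A \<le> powr_line M p f h 1" "A \<le> powr_line M p f h (-1)"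
  shows "A - powr_line M p f h 0 \<le> p * (p - 1) / 2 * A powr (1 - 2 / p) * (\<integral>z. \<bar>h z\<bar> powr p \<partial>M) powr (2 / p)"
proof (cases "A \<le> powr_line M p f h 0")
  case True
  have "0 \<le> p * (p - 1) / 2 * A powr (1 - 2 / p) * (\<integral>z. \<bar>h z\<bar> powr p \<partial>M) powr (2 / p)"
    using p by simp
  with True show ?thesis by linarith
next
  case False
  define g where "g = powr_line M p f h"
  have cont: "continuous_on {-1..1} g"
    unfolding g_def using continuous_on_powr_line[OF f h] p by simp
  \<comment> \<open>Stop at the first hitting times of \<open>A\<close> on both sides of 0, so that \<open>g \<le> A\<close> in between.\<close>
  obtain \<beta> where \<beta>: "0 < \<beta>" "\<beta> \<le> 1" "g \<beta> = A" "\<And>t. t \<in> {0..\<beta>} \<Longrightarrow> g t \<le> A"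
  proof (rule first_hitting_time[of g A])
    show "continuous_on {0..1} g"
      using cont by (rule continuous_on_subset) auto
  qed (use False A in \<open>simp_all add: g_def\<close>)
  obtain \<beta>' where \<beta>': "0 < \<beta>'" "\<beta>' \<le> 1" "g (- \<beta>') = A" "\<And>t. t \<in> {0..\<beta>'} \<Longrightarrow> g (- t) \<le> A"
  proof (rule first_hitting_time[of "\<lambda>t. g (- t)" A])
    show "continuous_on {0..1} (\<lambda>t. g (- t))"
      by (intro continuous_on_compose2[OF cont] continuous_intros) auto
  qed (use False A in \<open>simp_all add: g_def\<close>)
  have "g t \<le> A" if "t \<in> {- \<beta>'..\<beta>}" for t
    using that \<beta>(4)[of t] \<beta>'(4)[of "- t"] by (cases "0 \<le> t") auto
  moreover have "0 < A" using False powr_line_nonneg[of M p f h 0] by linarith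
  ultimately show ?thesis
    using powr_line_gap_le_on_interval[OF f h p, of "- \<beta>'" \<beta>] \<beta> \<beta>' by (simp add: g_def)
qed

lemma powr_line_gap_ge_nondegenerate:
  assumes f: "f \<in> Lp_space M p" and h: "h \<in> Lp_space M p" and p: "1 < p" "p \<le> 2"
    and A: "0 < A" "powr_line M p f h 1 = A" "powr_line M p f h (-1) = A"
    and H: "0 < (\<integral>z. \<bar>h z\<bar> powr p \<partial>M)"
  shows "p * (p - 1) / 2 * A powr ((p - 2) / p) * (\<integral>z. \<bar>h z\<bar> powr p \<partial>M) powr (2 / p) \<le> A - powr_line M p f h 0"
proof -
  define g where "g = powr_line M p f h"
  define C where "C = powr_line_lip M p f h"
  define \<theta> where "\<theta> = (p - 2) / p"
  define c where "c = p * (p - 1) / 2 * (\<integral>z. \<bar>h z\<bar> powr p \<partial>M) powr (2 / p)"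
  define K where "K = 2 * c * A powr \<theta>"
  define \<rho> where "\<rho> \<delta> = c * (A powr \<theta> - (A + C * \<delta>) powr \<theta>)" for \<delta>
  have "\<theta> \<le> 0" using p by (simp add: \<theta>_def divide_nonpos_pos)
  have "0 \<le> c" using p by (simp add: c_def)
  \<comment> \<open>\<open>C > 0\<close> keeps \<open>g x + C \<bar>y - x\<bar>\<close> away from 0, where \<open>powr\<close> with the exponent \<open>\<theta> \<le> 0\<close> jumps to 0.\<close>
  have "0 < C" using powr_line_lip_pos[OF f h p(1) H] by (simp add: C_def)
  have below: "g x \<le> A" if "\<bar>x\<bar> \<le> 1" for x
    using powr_line_convex[OF f h p(1) that] A by (simp add: g_def field_simps)
  have local: "- g y \<le> - g x + - powr_line_slope M p f h x * (y - x) + (- K / 2 + \<rho> \<bar>y - x\<bar>) * (y - x)\<^sup>2"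
    if "x \<in> {-1..1}" "y \<in> {-1..1}" for x y
  proof (cases "x = y")
    case False
    have "\<bar>x\<bar> \<le> 1" "\<bar>y\<bar> \<le> 1" using that by auto
    from powr_line_lower[OF f h p this]
    have "g x + powr_line_slope M p f h x * (y - x) + c * (y - x)\<^sup>2 * (g x + C * \<bar>y - x\<bar>) powr \<theta> \<le> g y"
      by (simp add: g_def C_def c_def \<theta>_def mult_ac)
    moreover have "(A + C * \<bar>y - x\<bar>) powr \<theta> \<le> (g x + C * \<bar>y - x\<bar>) powr \<theta>"
      using below[OF \<open>\<bar>x\<bar> \<le> 1\<close>] powr_line_nonneg[of M p f h x] \<open>0 < C\<close> \<open>\<theta> \<le> 0\<close> False
      by (intro powr_mono2') (auto simp: g_def add_nonneg_pos)
    then have "c * (y - x)\<^sup>2 * (A + C * \<bar>y - x\<bar>) powr \<theta> \<le> c * (y - x)\<^sup>2 * (g x + C * \<bar>y - x\<bar>) powr \<theta>"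
      using \<open>0 \<le> c\<close> by (intro mult_left_mono) auto
    ultimately show ?thesis by (simp add: K_def \<rho>_def algebra_simps)
  qed simp
  have "(\<rho> \<longlongrightarrow> c * (A powr \<theta> - (A + C * 0) powr \<theta>)) (at_right 0)"
    unfolding \<rho>_def using A by (intro tendsto_intros) auto
  then have \<rho>: "(\<rho> \<longlongrightarrow> 0) (at_right 0)" by simp
  have global: "- g t \<le> - g 0 + - powr_line_slope M p f h 0 * t + - K / 2 * t\<^sup>2" if "t \<in> {-1..1}" for t
    using local_quadratic_bound_global[where a = "-1" and b = 1 and s = 0 and t = t, OF local \<rho>] that
    by simp
  have "- A - (- g 0) \<le> - K / 2 * (- (-1) * 1)"
    using global[of 1] global[of "-1"] A by (intro quadratic_two_sided_bound) (auto simp: g_def)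
  then show ?thesis by (simp add: g_def K_def c_def \<theta>_def mult_ac)
qed

lemma powr_line_gap_ge:
  assumes f: "f \<in> Lp_space M p" and h: "h \<in> Lp_space M p" and p: "1 < p" "p \<le> 2"
    and A: "0 < A" "powr_line M p f h 1 = A" "powr_line M p f h (-1) = A"
  shows "p * (p - 1) / 2 * A powr ((p - 2) / p) * (\<integral>z. \<bar>h z\<bar> powr p \<partial>M) powr (2 / p) \<le> A - powr_line M p f h 0"
proof (cases "(\<integral>z. \<bar>h z\<bar> powr p \<partial>M) = 0")
  case True
  have "powr_line M p f h 0 \<le> A"
    using powr_line_convex[OF f h p(1), of 0] A by simp
  with True show ?thesis by simp
next
  case False
  then have "0 < (\<integral>z. \<bar>h z\<bar> powr p \<partial>M)"
    by (simp add: integral_nonneg_AE order_le_neq_trans)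
  with powr_line_gap_ge_nondegenerate[OF f h p A] show ?thesis .
qed

section \<open>Disjoint balls\<close>

lemma Lp_balls_disjoint_imp_powr_line_ge:
  assumes p: "0 < p" and r: "0 < r" and u: "u \<in> Lp_space M p" and v: "v \<in> Lp_space M p"
    and disjoint: "Lp_ball M p (\<lambda>z. x z + u z) r \<inter> Lp_ball M p (\<lambda>z. - x z - v z) r = {}"
  shows "r powr p \<le> powr_line M p (\<lambda>z. (u z + v z) / 2) x 1"
proof (rule ccontr)
  assume "\<not> ?thesis"
  then have small: "Lp_norm M p (\<lambda>z. (u z + v z) / 2 + x z) < r"
    unfolding Lp_norm_less_iff[OF p r] by (simp add: powr_line_def)
  \<comment> \<open>The midpoint \<open>(u - v) / 2\<close> lies at distance \<open>\<parallel>(u + v) / 2 + x\<parallel>\<close> from both centres.\<close>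
  define w where "w = (\<lambda>z. (u z - v z) / 2)"
  have "w \<in> Lp_space M p"
    using Lp_space_lincomb[OF u v p, of "1 / 2" "- 1 / 2"] by (simp add: w_def diff_divide_distrib)
  moreover have "Lp_norm M p (\<lambda>z. w z - (x z + u z)) = Lp_norm M p (\<lambda>z. (u z + v z) / 2 + x z)"
    by (rule Lp_norm_cong) (simp add: w_def abs_minus_commute field_simps)
  moreover have "Lp_norm M p (\<lambda>z. w z - (- x z - v z)) = Lp_norm M p (\<lambda>z. (u z + v z) / 2 + x z)"
    by (rule Lp_norm_cong) (simp add: w_def field_simps)
  ultimately have "w \<in> Lp_ball M p (\<lambda>z. x z + u z) r \<inter> Lp_ball M p (\<lambda>z. - x z - v z) r"
    using small by (simp add: Lp_ball_def)
  with disjoint show False by simp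
qed

lemma powr_line_uminus: "powr_line M p (\<lambda>z. - f z) h t = powr_line M p f h (- t)"
  unfolding powr_line_def by (simp add: abs_minus_commute add.commute)

lemma integral_clarkson_ge2:
  assumes u: "u \<in> Lp_space M p" and v: "v \<in> Lp_space M p" and p: "2 \<le> p"
  shows "(\<integral>z. \<bar>(u z + v z) / 2\<bar> powr p \<partial>M) + (\<integral>z. \<bar>(u z - v z) / 2\<bar> powr p \<partial>M)
           \<le> ((\<integral>z. \<bar>u z\<bar> powr p \<partial>M) + (\<integral>z. \<bar>v z\<bar> powr p \<partial>M)) / 2"
proof -
  have I: "integrable M (\<lambda>z. \<bar>a * u z + b * v z\<bar> powr p)" for a b
    using Lp_spaceD(2)[OF Lp_space_lincomb[OF u v]] p by simp
  have "(\<integral>z. \<bar>(u z + v z) / 2\<bar> powr p \<partial>M) + (\<integral>z. \<bar>(u z - v z) / 2\<bar> powr p \<partial>M)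
      = (\<integral>z. \<bar>(u z + v z) / 2\<bar> powr p + \<bar>(u z - v z) / 2\<bar> powr p \<partial>M)"
    using I[of "1 / 2" "1 / 2"] I[of "1 / 2" "- 1 / 2"] by (simp add: add_divide_distrib diff_divide_distrib)
  also have "\<dots> \<le> (\<integral>z. (\<bar>u z\<bar> powr p + \<bar>v z\<bar> powr p) / 2 \<partial>M)"
    using clarkson_abs_powr_ge2[OF p] Lp_spaceD(2)[OF u] Lp_spaceD(2)[OF v] by (intro integral_mono') auto
  also have "\<dots> = ((\<integral>z. \<bar>u z\<bar> powr p \<partial>M) + (\<integral>z. \<bar>v z\<bar> powr p \<partial>M)) / 2"
    using Lp_spaceD(2)[OF u] Lp_spaceD(2)[OF v] by simp
  finally show ?thesis .
qed

lemma powr_line_clarkson_le2: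
  assumes f: "f \<in> Lp_space M p" and h: "h \<in> Lp_space M p" and p: "1 < p" "p \<le> 2"
  shows "powr_line M p f h 1 + powr_line M p f h (-1) \<le> 2 * powr_line M p f h 0 + 2 * (\<integral>z. \<bar>h z\<bar> powr p \<partial>M)"
proof -
  have I: "integrable M (\<lambda>z. \<bar>f z + t * h z\<bar> powr p)" for t
    using Lp_spaceD(2)[OF Lp_space_line[OF f h]] p by simp
  have "powr_line M p f h 1 + powr_line M p f h (-1) = (\<integral>z. \<bar>f z + h z\<bar> powr p + \<bar>f z - h z\<bar> powr p \<partial>M)"
    using I[of 1] I[of "-1"] by (simp add: powr_line_def)
  also have "\<dots> \<le> (\<integral>z. 2 * \<bar>f z\<bar> powr p + 2 * \<bar>h z\<bar> powr p \<partial>M)"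
    using clarkson_abs_powr_le2[OF p] Lp_spaceD(2)[OF f] Lp_spaceD(2)[OF h] by (intro integral_mono') auto
  also have "\<dots> = 2 * powr_line M p f h 0 + 2 * (\<integral>z. \<bar>h z\<bar> powr p \<partial>M)"
    using Lp_spaceD(2)[OF f] Lp_spaceD(2)[OF h] by (simp add: powr_line_def)
  finally show ?thesis .
qed

lemma integral_abs_diff_powr:
  fixes u v :: "'a \<Rightarrow> real"
  shows "(\<integral>z. \<bar>u z - v z\<bar> powr p \<partial>M) = 2 powr p * (\<integral>z. \<bar>(u z - v z) / 2\<bar> powr p \<partial>M)"
  by (simp add: powr_divide)

lemma Lp_norm_diff_powr_le_ge2:
  assumes p: "2 \<le> p" and x: "x \<in> Lp_space M p" and u: "u \<in> Lp_space M p" and v: "v \<in> Lp_space M p"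
    and r: "Lp_norm M p u = r" "Lp_norm M p v = r"
    and ge: "r powr p \<le> powr_line M p (\<lambda>z. (u z + v z) / 2) x 1"
            "r powr p \<le> powr_line M p (\<lambda>z. (u z + v z) / 2) x (-1)"
  shows "Lp_norm M p (\<lambda>z. u z - v z) powr p \<le> 2 powr (p - 1) * p * (p - 1) * r powr (p - 2) * (Lp_norm M p x)\<^sup>2"
proof -
  have p0: "0 < p" using p by simp
  define y where "y = (\<lambda>z. (u z + v z) / 2)"
  have "y \<in> Lp_space M p"
    using Lp_space_lincomb[OF u v p0, of "1 / 2" "1 / 2"] by (simp add: y_def add_divide_distrib)
  have "(r powr p) powr (1 - 2 / p) = r powr (p - 2)"
    using p by (simp add: powr_powr right_diff_distrib)
  with powr_line_gap_le[OF \<open>y \<in> Lp_space M p\<close> x p ge[folded y_def]]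
  have "r powr p - (\<integral>z. \<bar>y z\<bar> powr p \<partial>M) \<le> p * (p - 1) / 2 * r powr (p - 2) * (Lp_norm M p x)\<^sup>2"
    using p0 by (simp add: powr_line_def Lp_norm_power2)
  moreover have "(\<integral>z. \<bar>y z\<bar> powr p \<partial>M) + (\<integral>z. \<bar>(u z - v z) / 2\<bar> powr p \<partial>M) \<le> r powr p"
    using integral_clarkson_ge2[OF u v p] r by (simp add: y_def Lp_norm_powr[OF p0, symmetric])
  ultimately have "2 powr p * (\<integral>z. \<bar>(u z - v z) / 2\<bar> powr p \<partial>M)
                     \<le> 2 powr p * (p * (p - 1) / 2 * r powr (p - 2) * (Lp_norm M p x)\<^sup>2)"
    by (intro mult_left_mono) auto
  then show ?thesis
    by (simp add: Lp_norm_powr[OF p0] integral_abs_diff_powr powr_diff mult_ac)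
qed

lemma Lp_norm_diff_power2_le_le2:
  assumes p: "1 < p" "p \<le> 2" and x: "x \<in> Lp_space M p" and u: "u \<in> Lp_space M p" and v: "v \<in> Lp_space M p"
    and r: "0 < r" "Lp_norm M p u = r" "Lp_norm M p v = r"
    and ge: "r powr p \<le> powr_line M p (\<lambda>z. (u z + v z) / 2) x 1"
            "r powr p \<le> powr_line M p (\<lambda>z. (u z + v z) / 2) x (-1)"
  shows "(Lp_norm M p (\<lambda>z. u z - v z))\<^sup>2 \<le> 8 / (p * (p - 1)) * r powr (2 - p) * Lp_norm M p x powr p"
proof -
  have p0: "0 < p" using p by simp
  define y where "y = (\<lambda>z. (u z + v z) / 2)"
  define d where "d = (\<lambda>z. (u z - v z) / 2)"
  have y: "y \<in> Lp_space M p"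
    using Lp_space_lincomb[OF u v p0, of "1 / 2" "1 / 2"] by (simp add: y_def add_divide_distrib)
  have d: "d \<in> Lp_space M p"
    using Lp_space_lincomb[OF u v p0, of "1 / 2" "- 1 / 2"] by (simp add: d_def diff_divide_distrib)
  have "powr_line M p y d 1 = r powr p" "powr_line M p y d (-1) = r powr p"
    using r by (simp_all add: powr_line_def y_def d_def Lp_norm_powr[OF p0, symmetric] field_simps)
  moreover have "0 < r powr p" using r by simp
  ultimately have "p * (p - 1) / 2 * (r powr p) powr ((p - 2) / p) * (\<integral>z. \<bar>d z\<bar> powr p \<partial>M) powr (2 / p)
          \<le> r powr p - (\<integral>z. \<bar>y z\<bar> powr p \<partial>M)"
    using powr_line_gap_ge[OF y d p, of "r powr p"] by (simp add: powr_line_def)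
  moreover have "(r powr p) powr ((p - 2) / p) = r powr (p - 2)"
    using p by (simp add: powr_powr)
  ultimately have "p * (p - 1) / 2 * r powr (p - 2) * (\<integral>z. \<bar>d z\<bar> powr p \<partial>M) powr (2 / p)
          \<le> r powr p - (\<integral>z. \<bar>y z\<bar> powr p \<partial>M)"
    by simp
  also have "\<dots> \<le> Lp_norm M p x powr p"
    using powr_line_clarkson_le2[OF y x p] ge[folded y_def] by (simp add: powr_line_def Lp_norm_powr[OF p0])
  finally have "(\<integral>z. \<bar>d z\<bar> powr p \<partial>M) powr (2 / p) \<le> 2 / (p * (p - 1)) * r powr (2 - p) * Lp_norm M p x powr p"
    using p r by (simp add: field_simps powr_diff)
  moreover have "(Lp_norm M p (\<lambda>z. u z - v z))\<^sup>2 = 4 * (\<integral>z. \<bar>d z\<bar> powr p \<partial>M) powr (2 / p)"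
    using p0 by (simp add: Lp_norm_power2 integral_abs_diff_powr d_def powr_mult powr_powr)
  ultimately show ?thesis by simp
qed

theorem lemma5p1:
  fixes M :: "'a measure" and p r :: real and x u v :: "'a \<Rightarrow> real"
  assumes "1 < p"
    and "x \<in> Lp_space M p" and "u \<in> Lp_space M p" and "v \<in> Lp_space M p"
    and "0 < r" and "Lp_norm M p u = r" and "Lp_norm M p v = r"
    and "Lp_ball M p (\<lambda>z. x z + u z) r \<inter> Lp_ball M p (\<lambda>z. - x z - v z) r = {}"
    and "Lp_ball M p (\<lambda>z. x z - u z) r \<inter> Lp_ball M p (\<lambda>z. - x z + v z) r = {}"
  shows "(2 \<le> p \<longrightarrow> Lp_norm M p (\<lambda>z. u z - v z) powr p
            \<le> 2 powr (p - 1) * p * (p - 1) * r powr (p - 2) * (Lp_norm M p x)\<^sup>2)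
       \<and> (p \<le> 2 \<longrightarrow> (Lp_norm M p (\<lambda>z. u z - v z))\<^sup>2
            \<le> 8 / (p * (p - 1)) * r powr (2 - p) * Lp_norm M p x powr p)"
proof -
  have p0: "0 < p" using assms(1) by simp
  have neg_u: "(\<lambda>z. - u z) \<in> Lp_space M p" and neg_v: "(\<lambda>z. - v z) \<in> Lp_space M p"
    using Lp_space_lincomb[OF assms(3) assms(4) p0, of "-1" 0] Lp_space_lincomb[OF assms(3) assms(4) p0, of 0 "-1"]
    by simp_all
  have ge: "r powr p \<le> powr_line M p (\<lambda>z. (u z + v z) / 2) x 1"
    using Lp_balls_disjoint_imp_powr_line_ge[OF p0 assms(5,3,4,8)] .
  have "r powr p \<le> powr_line M p (\<lambda>z. (- u z + - v z) / 2) x 1"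
    using Lp_balls_disjoint_imp_powr_line_ge[OF p0 assms(5) neg_u neg_v] assms(9) by simp
  moreover have "(\<lambda>z. (- u z + - v z) / 2) = (\<lambda>z. - ((u z + v z) / 2))"
    by (simp add: fun_eq_iff minus_divide_left)
  ultimately have ge': "r powr p \<le> powr_line M p (\<lambda>z. (u z + v z) / 2) x (-1)"
    by (simp only: powr_line_uminus)
  show ?thesis
    using Lp_norm_diff_powr_le_ge2[OF _ assms(2-4,6,7) ge ge']
          Lp_norm_diff_power2_le_le2[OF assms(1) _ assms(2-7) ge ge'] by blast
qed

end
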